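(* Let $(\xi_k)_{k\in\mathbb{N}}$ be i.i.d. exponential random variables with unit mean, $S_j=\xi_1+\dots+\xi_j$, and consider the associated Crump–Mode–Jagers process with $Y^{(j)}_m$ and $U_m(t)=t^m/m!$ as in the context. Let $k=k(t)$ be integer-valued with $k(t)\to\infty$ and $k(t)=o(t)$ as $t\to\infty$. Then $$\mathbb{E}\Big(\sum_{j\geq 1}\big(Y^{(j)}_{k-1}(t-S_j)-U_{k-1}(t-S_j)\big)\mathbf{1}_{\{S_j\leq t\}}\Big)^2\sim\frac{1}{4}\frac{t^{2k}}{(k!)^2}\Big(\frac{k}{t}\Big)^2,\qquad t\to\infty.$$
   Context: The CMJ process: at time $0$ there is one individual (the ancestor), which produces first-generation offspring at birth times given by the point process $\sum_{n\ge1}\delta_{S_n}$; each individual born at time $s$ produces its own children at times $s+$(points of an independent copy of this point process); all individuals act independently. For $m\in\mathbb{N}$, $Y_m(t)$ is the number of $m$-th generation individuals with birth times $\le t$, and $U_m(t):=\mathbb{E}Y_m(t)$, which equals $t^m/m!$ for $t\ge 0$ in the exponential case. For $j\in\mathbb{N}$ and $m\ge1$, $Y^{(j)}_m(t)$ is the number of $(m+1)$-st generation descendants of the first-generation individual born at time $S_j$ that are born in $[S_j,S_j+t]$; the processes $(Y^{(j)}_m(t))_{t\ge0}$, $j\in\mathbb{N}$, are independent copies of $(Y_m(t))_{t\ge0}$, independent of $(S_n)$. *)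

theory Defs
  imports "HOL-Probability.Probability" "HOL-Library.Landau_Symbols"
begin

text \<open>Individuals are labelled by lists
  of positive naturals; the individual with label v has i.i.d. inter-birth times
  x v 0, x v 1, ...; its n-th child (n \<ge> 1) has label v @ [n] and is born
  cmj_S x v n = x v 0 + ... + x v (n-1) time units after v.\<close>

definition cmj_S :: "(nat list \<Rightarrow> nat \<Rightarrow> real) \<Rightarrow> nat list \<Rightarrow> nat \<Rightarrow> real" where
  "cmj_S x v n = (\<Sum>l<n. x v l)"

fun cmj_birth :: "(nat list \<Rightarrow> nat \<Rightarrow> real) \<Rightarrow> nat list \<Rightarrow> nat list \<Rightarrow> real" where
  "cmj_birth x v [] = 0"
| "cmj_birth x v (n # u) = cmj_S x v n + cmj_birth x (v @ [n]) u"

text \<open>Number of m-th generation descendants (relative to v) of v born within time t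
  after the birth of v.  With v = [] this is Y_m(t); with v = [j] it is Y^(j)_m(t).\<close>
definition cmj_Y :: "(nat list \<Rightarrow> nat \<Rightarrow> real) \<Rightarrow> nat list \<Rightarrow> nat \<Rightarrow> real \<Rightarrow> real" where
  "cmj_Y x v m t = real (card {u. length u = m \<and> (\<forall>i\<in>set u. 1 \<le> i) \<and> cmj_birth x v u \<le> t})"

definition cmj_U :: "nat \<Rightarrow> real \<Rightarrow> real" where
  "cmj_U m t = t ^ m / fact m"

end

theory Submission
  imports Defs "HOL-Real_Asymp.Real_Asymp"
begin

(*
  All inter-birth times are realised as the coordinates of one product of Exp(1) laws,
  indexed by individual and birth rank.  The first-generation birth times S_1 < S_2 < ...
  then form a unit-rate Poisson process on [0, oo) independent of the subtrees of the
  children, so sums over the first generation obey Campbell-type formulas: their means are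
  integrals over [0, oo), and sums over ordered pairs of distinct children are double
  integrals over the quadrant [0, oo)^2, because the products of Erlang densities of the two
  arrival times and of their gap sum to its indicator.

  Put m = k - 1, Y = sum_j Y^(j)_m (t - S_j) 1{S_j <= t} (this is Y_k(t)) and
  A = sum_j U_m (t - S_j) 1{S_j <= t}; the expectation in the theorem is E (Y - A)^2.
  The Campbell formulas give, by induction on the generation,
  E Y_k(t)^2 = sum_{i <= k} c(k, i) t^(2k - i) with c(k, i) = (2(k - i))! / ((k - i)!^2 (2k - i)!),
  and E[Y A] = E[A^2] = W(t), an explicit two-term polynomial.  Hence the expectation is
  sum_{n < m} c(k, n + 2) t^(2m - n).  Consecutive coefficients grow at most by the factor k,
  so for k = o(t) the sum is its first term up to a factor 1 + O(k/t), and the first term is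
  2m/(2m - 1) times 1/4 t^(2k)/(k!)^2 (k/t)^2.
*)

section \<open>Sums, integrals and Erlang densities\<close>

lemma suminf_comm_ennreal:
  fixes f :: "nat \<Rightarrow> nat \<Rightarrow> ennreal"
  shows "(\<Sum>i. \<Sum>j. f i j) = (\<Sum>j. \<Sum>i. f i j)"
proof -
  have "(\<Sum>i. \<Sum>j. f i j) = (\<Sum>i. \<integral>\<^sup>+j. f i j \<partial>count_space UNIV)"
    by (simp add: nn_integral_count_space_nat)
  also have "\<dots> = (\<integral>\<^sup>+j. (\<Sum>i. f i j) \<partial>count_space UNIV)"
    by (rule nn_integral_suminf[symmetric]) simp
  also have "\<dots> = (\<Sum>j. \<Sum>i. f i j)"
    by (simp add: nn_integral_count_space_nat)
  finally show ?thesis .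
qed

lemma suminf_mult_suminf_ennreal:
  fixes a b :: "nat \<Rightarrow> ennreal"
  shows "(\<Sum>i. a i) * (\<Sum>i. b i) = (\<Sum>i. a i * b i) +
    (\<Sum>i. \<Sum>i'. if i < i' then a i * b i' else 0) + (\<Sum>i. \<Sum>i'. if i < i' then b i * a i' else 0)"
proof -
  have row: "(\<Sum>i'. a i * b i') = a i * b i +
      (\<Sum>i'. if i < i' then a i * b i' else 0) + (\<Sum>i'. if i' < i then a i * b i' else 0)" for i
  proof -
    have "(\<Sum>i'. a i * b i') = (\<Sum>i'. (if i' = i then a i * b i' else 0) +
        (if i < i' then a i * b i' else 0) + (if i' < i then a i * b i' else 0))"
      by (intro suminf_cong) auto
    also have "\<dots> = (\<Sum>i'. if i' = i then a i * b i' else 0) +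
        (\<Sum>i'. if i < i' then a i * b i' else 0) + (\<Sum>i'. if i' < i then a i * b i' else 0)"
      by (simp add: suminf_add)
    also have "(\<Sum>i'. if i' = i then a i * b i' else 0) = a i * b i"
      by (subst suminf_finite[of "{i}"]) auto
    finally show ?thesis .
  qed
  have "(\<Sum>i. a i) * (\<Sum>i. b i) = (\<Sum>i. \<Sum>i'. a i * b i')"
    by (subst ennreal_suminf_multc[symmetric]) (simp only: ennreal_suminf_cmult[symmetric])
  also have "\<dots> = (\<Sum>i. a i * b i + (\<Sum>i'. if i < i' then a i * b i' else 0) +
      (\<Sum>i'. if i' < i then a i * b i' else 0))"
    by (simp only: row)
  also have "\<dots> = (\<Sum>i. a i * b i) + (\<Sum>i. \<Sum>i'. if i < i' then a i * b i' else 0) +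
      (\<Sum>i. \<Sum>i'. if i' < i then a i * b i' else 0)"
    by (simp add: suminf_add)
  also have "(\<Sum>i. \<Sum>i'. if i' < i then a i * b i' else 0) = (\<Sum>i. \<Sum>i'. if i < i' then b i * a i' else 0)"
    by (subst suminf_comm_ennreal) (intro suminf_cong, simp add: mult.commute)
  finally show ?thesis .
qed

lemma suminf_Suc_eq_sum:
  fixes f :: "nat \<Rightarrow> ennreal"
  assumes "finite J" "0 \<notin> J" "\<And>i. Suc i \<notin> J \<Longrightarrow> f (Suc i) = 0"
  shows "(\<Sum>i. f (Suc i)) = (\<Sum>j\<in>J. f j)"
proof -
  have J: "J = Suc ` {i. Suc i \<in> J}"
  proof (intro set_eqI iffI)
    fix j
    assume "j \<in> J"
    then show "j \<in> Suc ` {i. Suc i \<in> J}"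
      using assms(2) by (cases j) auto
  qed auto
  have "finite {i. Suc i \<in> J}"
    using assms(1) by (rule finite_vimageI[where h = Suc, unfolded vimage_def]) simp
  then have "(\<Sum>i. f (Suc i)) = (\<Sum>i\<in>{i. Suc i \<in> J}. f (Suc i))"
    by (rule suminf_finite) (use assms(3) in auto)
  also have "\<dots> = (\<Sum>j\<in>J. f j)"
    by (subst (2) J) (simp add: sum.reindex)
  finally show ?thesis .
qed

lemma borel_measurable_sum_Collect:
  fixes h :: "nat \<Rightarrow> 'a \<Rightarrow> real"
  assumes [measurable]: "\<And>j. h j \<in> borel_measurable M" "\<And>j. Measurable.pred M (Q j)"
  shows "(\<lambda>x. \<Sum>j | Q j x. h j x) \<in> borel_measurable M"
proof (rule borel_measurable_LIMSEQ_real)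
  define bounded where "bounded x \<longleftrightarrow> (\<exists>N. \<forall>j. Q j x \<longrightarrow> j < N)" for x
  have [measurable]: "Measurable.pred M bounded"
    unfolding bounded_def by measurable
  have bounded_iff: "bounded x \<longleftrightarrow> finite {j. Q j x}" for x
    unfolding bounded_def finite_nat_set_iff_bounded by auto
  define u where "u N x = (\<Sum>j<N. if Q j x \<and> bounded x then h j x else 0)" for N x
  show "u N \<in> borel_measurable M" for N
    unfolding u_def by measurable
  fix x
  show "(\<lambda>N. u N x) \<longlonglongrightarrow> (\<Sum>j | Q j x. h j x)"
  proof (cases "bounded x")
    case True
    then obtain N0 where N0: "\<forall>j. Q j x \<longrightarrow> j < N0"
      unfolding bounded_def by auto
    have "u N x = (\<Sum>j | Q j x. h j x)" if "N0 \<le> N" for N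
    proof -
      have "u N x = (\<Sum>j\<in>{..<N} \<inter> {j. Q j x}. h j x)"
        unfolding u_def using True by (simp add: sum.inter_restrict)
      also have "{..<N} \<inter> {j. Q j x} = {j. Q j x}"
        using N0 that by auto
      finally show ?thesis .
    qed
    then show ?thesis
      by (intro tendsto_eventually) (auto simp: eventually_sequentially)
  next
    case False
    then show ?thesis
      using bounded_iff by (simp add: u_def)
  qed
qed

lemma AE_finite_of_nn_integral_mult_self:
  assumes "f \<in> borel_measurable M" "(\<integral>\<^sup>+x. f x * f x \<partial>M) = ennreal c"
  shows "AE x in M. f x < \<top>"
proof -
  have "AE x in M. f x * f x \<noteq> \<infinity>"
    using assms by (intro nn_integral_PInf_AE) simp_all
  then show ?thesis
    by (auto simp: ennreal_mult_eq_top_iff top.not_eq_extremum)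
qed

lemma has_bochner_integral_enn2real_mult:
  assumes [measurable]: "f \<in> borel_measurable M" "g \<in> borel_measurable M"
    and "(\<integral>\<^sup>+x. f x * g x \<partial>M) = ennreal c" "0 \<le> c"
    and "AE x in M. f x < \<top>" "AE x in M. g x < \<top>"
  shows "has_bochner_integral M (\<lambda>x. enn2real (f x) * enn2real (g x)) c"
proof (rule has_bochner_integral_nn_integral)
  have "(\<integral>\<^sup>+x. ennreal (enn2real (f x) * enn2real (g x)) \<partial>M) = (\<integral>\<^sup>+x. f x * g x \<partial>M)"
    by (rule nn_integral_cong_AE) (use assms(5,6) in \<open>auto simp: ennreal_mult''\<close>)
  with assms show "(\<integral>\<^sup>+x. ennreal (enn2real (f x) * enn2real (g x)) \<partial>M) = ennreal c"
    by simp
qed (use assms in auto)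

lemma nn_integral_Icc_power_diff:
  assumes "0 \<le> s" "0 \<le> c"
  shows "(\<integral>\<^sup>+r. ennreal (c * (s - r) ^ n) * indicator {0..s} r \<partial>lborel) = ennreal (c * s ^ Suc n / Suc n)"
proof -
  have "((\<lambda>r. - c * (s - r) ^ Suc n / Suc n) has_real_derivative c * (s - r) ^ n) (at r)" for r
  proof -
    have "((\<lambda>r. - c / Suc n * (s - r) ^ Suc n) has_real_derivative
        (- c / Suc n) * ((1 + real n) * (- 1 * (s - r) ^ n))) (at r)"
      by (intro DERIV_cmult DERIV_power_Suc) (auto intro!: derivative_eq_intros)
    moreover have "(\<lambda>r. - c / Suc n * (s - r) ^ Suc n) = (\<lambda>r. - c * (s - r) ^ Suc n / Suc n)"
      by (auto simp: fun_eq_iff)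
    moreover have "(- c / Suc n) * ((1 + real n) * (- 1 * (s - r) ^ n)) = c * (s - r) ^ n"
      by (simp add: field_simps)
    ultimately show ?thesis
      by simp
  qed
  then have "(\<integral>\<^sup>+r. ennreal (c * (s - r) ^ n) * indicator {0..s} r \<partial>lborel) =
      ennreal ((- c * (s - s) ^ Suc n / Suc n) - (- c * (s - 0) ^ Suc n / Suc n))"
    using assms by (intro nn_integral_FTC_Icc) auto
  then show ?thesis
    by simp
qed

lemma erlang_density_sums: "(\<lambda>n. erlang_density n 1 r) sums indicator {0..} r"
proof (cases "r < 0")
  case False
  have "(\<lambda>n. r ^ n / fact n) sums exp r"
    using exp_converges[of r] by (simp add: divide_inverse_commute scaleR_conv_of_real)
  from sums_mult2[OF this, of "exp (- r)"] show ?thesis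
    using False by (simp add: erlang_density_def exp_minus field_simps)
qed (simp add: erlang_density_def)

lemma erlang_density_shift_sums:
  "(\<lambda>n. if i < n then erlang_density (n - i - 1) 1 r else 0) sums indicator {0..} r"
proof -
  have "(\<lambda>n. (\<lambda>n. if i < n then erlang_density (n - i - 1) 1 r else 0) (n + Suc i)) sums indicator {0..} r"
    using erlang_density_sums by simp
  then show ?thesis
    by (subst (asm) sums_iff_shift) simp
qed

lemma suminf_erlang_density_pairs:
  "(\<Sum>i. \<Sum>i'. ennreal (if i < i' then erlang_density i 1 a * erlang_density (i' - i - 1) 1 b else 0)) =
    indicator {0..} a * indicator {0..} b"
proof -
  have "(\<Sum>i'. ennreal (if i < i' then erlang_density i 1 a * erlang_density (i' - i - 1) 1 b else 0)) =
      ennreal (erlang_density i 1 a * indicator {0..} b)" for i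
    using sums_mult[OF erlang_density_shift_sums, of "erlang_density i 1 a" i b]
    by (intro suminf_ennreal_eq) (auto simp: if_distrib cong: if_cong)
  then have "(\<Sum>i. \<Sum>i'. ennreal (if i < i' then erlang_density i 1 a * erlang_density (i' - i - 1) 1 b else 0)) =
      (\<Sum>i. ennreal (erlang_density i 1 a * indicator {0..} b))"
    by simp
  also have "\<dots> = ennreal (indicator {0..} a * indicator {0..} b)"
    by (intro suminf_ennreal_eq sums_mult2[OF erlang_density_sums]) auto
  finally show ?thesis
    by (simp add: ennreal_mult' ennreal_indicator)
qed

section \<open>The clock space\<close>

(* curry x is the family of inter-birth times read by cmj_S and cmj_birth. *)
type_synonym clocks = "nat list \<times> nat \<Rightarrow> real"

definition Exp1 :: "real measure" where
  "Exp1 = density lborel (exponential_density 1)"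

definition clock_space :: "clocks measure" where
  "clock_space = PiM UNIV (\<lambda>_. Exp1)"

lemma prob_space_Exp1: "prob_space Exp1"
  unfolding Exp1_def by (rule prob_space_exponential_density) simp

lemma sets_Exp1 [measurable_cong]: "sets Exp1 = sets borel"
  unfolding Exp1_def by simp

lemma sets_clock_space [measurable_cong]:
  "sets clock_space = sets (PiM UNIV (\<lambda>_. borel :: real measure))"
  unfolding clock_space_def by (intro sets_PiM_cong) (auto simp: sets_Exp1)

interpretation clock_space: prob_space clock_space
  unfolding clock_space_def by (intro prob_space_PiM prob_space_Exp1)

lemma distr_clock_space_reindex:
  assumes "inj f"
  shows "distr clock_space (PiM UNIV (\<lambda>_. Exp1)) (\<lambda>x n. x (f n)) = PiM UNIV (\<lambda>_. Exp1)"
proof -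
  have "(\<lambda>x::clocks. \<lambda>n\<in>UNIV. x (f n)) = (\<lambda>x n. x (f n))"
    by (auto simp: restrict_def)
  with distr_PiM_reindex[of UNIV "\<lambda>_. Exp1" f UNIV] assms show ?thesis
    by (simp add: clock_space_def prob_space_Exp1)
qed

lemma distr_clock_space_coordinate: "distr clock_space borel (\<lambda>x. x i) = Exp1"
proof -
  have "distr clock_space borel (\<lambda>x. x i) = distr clock_space Exp1 (\<lambda>x. x i)"
    by (rule distr_cong) (auto simp: sets_Exp1)
  also have "\<dots> = Exp1"
    unfolding clock_space_def by (intro distr_PiM_component prob_space_Exp1) auto
  finally show ?thesis .
qed

lemma distributed_clock: "distributed clock_space lborel (\<lambda>x. x i) (exponential_density 1)"
proof -
  have "distr clock_space lborel (\<lambda>x. x i) = distr clock_space borel (\<lambda>x. x i)"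
    by (rule distr_cong) auto
  then show ?thesis
    unfolding distributed_def using distr_clock_space_coordinate by (simp add: Exp1_def)
qed

lemma indep_clocks: "clock_space.indep_vars (\<lambda>_. borel) (\<lambda>i x. x i) UNIV"
proof -
  have "(\<lambda>x. \<lambda>i\<in>UNIV. x i) = (\<lambda>x::clocks. x)"
    by (auto simp: restrict_def)
  then have "distr clock_space (PiM UNIV (\<lambda>_. borel)) (\<lambda>x. \<lambda>i\<in>UNIV. x i) = clock_space"
    by (simp add: distr_id2 sets_clock_space)
  moreover have "PiM UNIV (\<lambda>i. distr clock_space borel (\<lambda>x. x i)) = clock_space"
    unfolding distr_clock_space_coordinate by (simp add: clock_space_def)
  ultimately show ?thesis
    by (subst clock_space.indep_vars_iff_distr_eq_PiM) simp_all
qed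

lemma measurable_PiM_into_PiM_UNIV:
  "(\<lambda>x. x) \<in> measurable (PiM K (\<lambda>_. borel :: real measure)) (PiM UNIV (\<lambda>_. borel))"
proof (rule measurable_PiM_single')
  fix i
  show "(\<lambda>x. x i) \<in> borel_measurable (PiM K (\<lambda>_. borel :: real measure))"
  proof (cases "i \<in> K")
    case False
    then have "\<And>x. x \<in> space (PiM K (\<lambda>_. borel :: real measure)) \<Longrightarrow> x i = undefined"
      by (auto simp: space_PiM PiE_def extensional_def)
    then show ?thesis
      using measurable_cong[of "PiM K (\<lambda>_. borel :: real measure)" "\<lambda>x. x i" "\<lambda>_. undefined" borel] by simp
  qed measurable
qed (auto simp: space_PiM)

lemma measurable_pair_PiM_into_clock_space:
  assumes "(\<lambda>(x, y). H x y) \<in> borel_measurable (clock_space \<Otimes>\<^sub>M clock_space)"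
  shows "(\<lambda>(a, b). H a b) \<in> borel_measurable (PiM I (\<lambda>_. borel :: real measure) \<Otimes>\<^sub>M PiM J (\<lambda>_. borel))"
proof -
  have id_measurable: "(\<lambda>x. x) \<in> measurable (PiM K (\<lambda>_. borel :: real measure)) clock_space" for K
    using measurable_PiM_into_PiM_UNIV by (simp add: measurable_cong_sets[OF refl sets_clock_space])
  have "(\<lambda>p. H (fst p) (snd p)) \<in> borel_measurable (PiM I (\<lambda>_. borel :: real measure) \<Otimes>\<^sub>M PiM J (\<lambda>_. borel))"
    by (rule measurable_Pair_compose_split[OF assms measurable_compose[OF measurable_fst id_measurable]
        measurable_compose[OF measurable_snd id_measurable]])
  then show ?thesis
    by (simp add: split_beta)
qed

lemma nn_integral_indep_restrict:
  fixes H :: "clocks \<Rightarrow> clocks \<Rightarrow> ennreal"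
  assumes disj: "I \<inter> J = {}"
    and H_measurable: "(\<lambda>(x, y). H x y) \<in> borel_measurable (clock_space \<Otimes>\<^sub>M clock_space)"
    and H_restrict: "\<And>x y. H x y = H (restrict x I) (restrict y J)"
  shows "(\<integral>\<^sup>+x. H x x \<partial>clock_space) = (\<integral>\<^sup>+x. \<integral>\<^sup>+y. H x y \<partial>clock_space \<partial>clock_space)"
proof -
  let ?B = "\<lambda>K. PiM K (\<lambda>_. borel :: real measure)"
  let ?r1 = "\<lambda>x::clocks. restrict x I" and ?r2 = "\<lambda>x::clocks. restrict x J"
  let ?D1 = "distr clock_space (?B I) ?r1" and ?D2 = "distr clock_space (?B J) ?r2"
  have ind: "clock_space.indep_var (?B I) ?r1 (?B J) ?r2"
    using clock_space.indep_var_restrict[OF indep_clocks disj] by simp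
  have [measurable]: "?r1 \<in> measurable clock_space (?B I)" "?r2 \<in> measurable clock_space (?B J)"
    using ind by (auto dest: clock_space.indep_var_rv1 clock_space.indep_var_rv2)
  interpret D2: prob_space ?D2
    by (rule clock_space.prob_space_distr) simp
  have H'_measurable: "(\<lambda>(a, b). H a b) \<in> borel_measurable (?B I \<Otimes>\<^sub>M ?B J)"
    by (rule measurable_pair_PiM_into_clock_space[OF H_measurable])
  have slice_measurable: "H a \<in> borel_measurable (?B J)" if "a \<in> space (?B I)" for a
    using H'_measurable that by simp
  have "(\<integral>\<^sup>+x. H x x \<partial>clock_space) = (\<integral>\<^sup>+x. (\<lambda>(a, b). H a b) (?r1 x, ?r2 x) \<partial>clock_space)"
    by (subst H_restrict) simp
  also have "\<dots> = (\<integral>\<^sup>+p. (\<lambda>(a, b). H a b) p \<partial>distr clock_space (?B I \<Otimes>\<^sub>M ?B J) (\<lambda>x. (?r1 x, ?r2 x)))"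
    by (rule nn_integral_distr[symmetric]) (auto simp: H'_measurable)
  also have "\<dots> = (\<integral>\<^sup>+p. (\<lambda>(a, b). H a b) p \<partial>(?D1 \<Otimes>\<^sub>M ?D2))"
    using ind unfolding clock_space.indep_var_distribution_eq by simp
  also have "\<dots> = (\<integral>\<^sup>+a. \<integral>\<^sup>+b. H a b \<partial>?D2 \<partial>?D1)"
    by (subst D2.nn_integral_fst[symmetric])
       (auto simp: H'_measurable measurable_cong_sets[OF sets_pair_measure_cong[OF sets_distr sets_distr] refl])
  also have "\<dots> = (\<integral>\<^sup>+x. \<integral>\<^sup>+b. H (?r1 x) b \<partial>?D2 \<partial>clock_space)"
    by (rule nn_integral_distr)
       (auto intro!: D2.borel_measurable_nn_integral
         simp: H'_measurable measurable_cong_sets[OF sets_pair_measure_cong[OF refl sets_distr] refl])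
  also have "\<dots> = (\<integral>\<^sup>+x. \<integral>\<^sup>+y. H (?r1 x) (?r2 y) \<partial>clock_space \<partial>clock_space)"
  proof (rule nn_integral_cong)
    fix x
    have "H (?r1 x) \<in> borel_measurable (?B J)"
      by (rule slice_measurable) (simp add: space_PiM)
    then show "(\<integral>\<^sup>+b. H (?r1 x) b \<partial>?D2) = (\<integral>\<^sup>+y. H (?r1 x) (?r2 y) \<partial>clock_space)"
      by (simp add: nn_integral_distr)
  qed
  also have "\<dots> = (\<integral>\<^sup>+x. \<integral>\<^sup>+y. H x y \<partial>clock_space \<partial>clock_space)"
    by (simp only: H_restrict[symmetric])
  finally show ?thesis .
qed

section \<open>Sums over the first generation\<close>

definition birth :: "clocks \<Rightarrow> nat \<Rightarrow> real" where
  "birth x j = (\<Sum>l<j. x ([], l))"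

definition subtree :: "nat \<Rightarrow> clocks \<Rightarrow> clocks" where
  "subtree j x = (\<lambda>(v, l). x (j # v, l))"

lemma measurable_birth [measurable]: "(\<lambda>x. birth x j) \<in> borel_measurable clock_space"
  unfolding birth_def by measurable

lemma measurable_subtree [measurable]: "subtree j \<in> measurable clock_space clock_space"
  unfolding subtree_def measurable_cong_sets[OF sets_clock_space sets_clock_space]
  by (rule measurable_PiM_single') (auto simp: split_beta)

lemma distr_subtree: "distr clock_space clock_space (subtree j) = clock_space"
proof -
  have "inj (\<lambda>(v, l). (j # v, l))"
    by (auto simp: inj_def)
  from distr_clock_space_reindex[OF this]
  have "distr clock_space clock_space (\<lambda>x n. x (case n of (v, l) \<Rightarrow> (j # v, l))) = clock_space"
    by (simp add: clock_space_def)
  moreover have "(\<lambda>x n. x (case n of (v, l) \<Rightarrow> (j # v, l))) = subtree j"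
    by (auto simp: subtree_def fun_eq_iff split: prod.split)
  ultimately show ?thesis
    by simp
qed

lemma nn_integral_subtree:
  assumes "F \<in> borel_measurable clock_space"
  shows "(\<integral>\<^sup>+x. F (subtree j x) \<partial>clock_space) = integral\<^sup>N clock_space F"
  by (subst (2) distr_subtree[symmetric, of j]) (simp add: nn_integral_distr assms)

lemma distributed_sum_root_clocks:
  assumes "finite L" "L \<noteq> {}"
  shows "distributed clock_space lborel (\<lambda>x. \<Sum>l\<in>L. x ([], l)) (erlang_density (card L - 1) 1)"
proof -
  have indep: "clock_space.indep_vars (\<lambda>_. borel) (\<lambda>i x. x i) (Pair [] ` L)"
    by (rule clock_space.indep_vars_subset[OF indep_clocks]) simp
  have inj: "inj_on (Pair []) L"
    by (simp add: inj_on_def)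
  from clock_space.exponential_distributed_sum[OF _ _ zero_less_one distributed_clock indep] assms
  show ?thesis
    by (simp add: sum.reindex[OF inj] card_image[OF inj])
qed

lemma distributed_birth:
  assumes "1 \<le> j"
  shows "distributed clock_space lborel (\<lambda>x. birth x j) (erlang_density (j - 1) 1)"
proof -
  have "0 \<in> {..<j}"
    using assms by simp
  then show ?thesis
    using distributed_sum_root_clocks[of "{..<j}"] unfolding birth_def by auto
qed

lemma measurable_slice:
  assumes "(\<lambda>(r, y). F r y) \<in> borel_measurable (borel \<Otimes>\<^sub>M clock_space)"
  shows "F r \<in> borel_measurable clock_space"
  using measurable_compose_Pair1[of r borel, OF _ assms] by simp

lemma nn_integral_slice_subtree:
  assumes "(\<lambda>(r, y). F r y) \<in> borel_measurable (borel \<Otimes>\<^sub>M clock_space)"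
  shows "(\<integral>\<^sup>+y. F r (subtree j y) \<partial>clock_space) = (\<integral>\<^sup>+y. F r y \<partial>clock_space)"
  by (rule nn_integral_subtree[OF measurable_slice[OF assms]])

lemma measurable_child:
  assumes "(\<lambda>(r, y). F r y) \<in> borel_measurable (borel \<Otimes>\<^sub>M clock_space)"
  shows "(\<lambda>x. F (birth x j) (subtree j x)) \<in> borel_measurable clock_space"
proof -
  have "(\<lambda>x. (birth x j, subtree j x)) \<in> measurable clock_space (borel \<Otimes>\<^sub>M clock_space)"
    by measurable
  from measurable_comp[OF this assms] show ?thesis
    by (simp add: o_def)
qed

lemma nn_integral_child:
  assumes j: "1 \<le> j" and F[measurable]: "(\<lambda>(r, y). F r y) \<in> borel_measurable (borel \<Otimes>\<^sub>M clock_space)"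
  shows "(\<integral>\<^sup>+x. F (birth x j) (subtree j x) \<partial>clock_space) =
    (\<integral>\<^sup>+r. erlang_density (j - 1) 1 r * (\<integral>\<^sup>+y. F r y \<partial>clock_space) \<partial>lborel)"
proof -
  let ?K1 = "range (Pair [])" and ?K2 = "{(j # v, l) |v l. True}"
  have "(\<integral>\<^sup>+x. F (birth x j) (subtree j x) \<partial>clock_space) =
      (\<integral>\<^sup>+x. \<integral>\<^sup>+y. F (birth x j) (subtree j y) \<partial>clock_space \<partial>clock_space)"
  proof (rule nn_integral_indep_restrict[where I = ?K1 and J = ?K2])
    have "(\<lambda>(x, y). (birth x j, subtree j y)) \<in> measurable (clock_space \<Otimes>\<^sub>M clock_space) (borel \<Otimes>\<^sub>M clock_space)"
      by measurable
    from measurable_comp[OF this F]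
    show "(\<lambda>(x, y). F (birth x j) (subtree j y)) \<in> borel_measurable (clock_space \<Otimes>\<^sub>M clock_space)"
      by (simp add: o_def split_beta)
    fix x y :: clocks
    have "birth (restrict x ?K1) j = birth x j" "subtree j (restrict y ?K2) = subtree j y"
      by (auto simp: birth_def subtree_def fun_eq_iff)
    then show "F (birth x j) (subtree j y) = F (birth (restrict x ?K1) j) (subtree j (restrict y ?K2))"
      by simp
  qed auto
  also have "\<dots> = (\<integral>\<^sup>+x. (\<lambda>r. \<integral>\<^sup>+y. F r y \<partial>clock_space) (birth x j) \<partial>clock_space)"
    by (simp add: nn_integral_slice_subtree[OF F])
  also have "\<dots> = (\<integral>\<^sup>+r. erlang_density (j - 1) 1 r * (\<integral>\<^sup>+y. F r y \<partial>clock_space) \<partial>lborel)"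
    by (rule distributed_nn_integral[symmetric, OF distributed_birth[OF j]])
       (simp add: clock_space.borel_measurable_nn_integral)
  finally show ?thesis .
qed

definition sum_children :: "(real \<Rightarrow> clocks \<Rightarrow> ennreal) \<Rightarrow> clocks \<Rightarrow> ennreal" where
  "sum_children F x = (\<Sum>i. F (birth x (Suc i)) (subtree (Suc i) x))"

lemma measurable_sum_children:
  assumes "(\<lambda>(r, y). F r y) \<in> borel_measurable (borel \<Otimes>\<^sub>M clock_space)"
  shows "sum_children F \<in> borel_measurable clock_space"
  unfolding sum_children_def
  by (intro borel_measurable_suminf_order measurable_child[OF assms])

lemma nn_integral_sum_children:
  assumes F[measurable]: "(\<lambda>(r, y). F r y) \<in> borel_measurable (borel \<Otimes>\<^sub>M clock_space)"
  shows "(\<integral>\<^sup>+x. sum_children F x \<partial>clock_space) =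
    (\<integral>\<^sup>+r. indicator {0..} r * (\<integral>\<^sup>+y. F r y \<partial>clock_space) \<partial>lborel)"
proof -
  have "(\<integral>\<^sup>+x. sum_children F x \<partial>clock_space) =
      (\<Sum>i. \<integral>\<^sup>+r. erlang_density i 1 r * (\<integral>\<^sup>+y. F r y \<partial>clock_space) \<partial>lborel)"
    unfolding sum_children_def
    by (simp add: nn_integral_suminf measurable_child[OF F] nn_integral_child[OF _ F])
  also have "\<dots> = (\<integral>\<^sup>+r. (\<Sum>i. ennreal (erlang_density i 1 r)) * (\<integral>\<^sup>+y. F r y \<partial>clock_space) \<partial>lborel)"
    by (subst nn_integral_suminf[symmetric])
       (simp_all add: clock_space.borel_measurable_nn_integral ennreal_suminf_multc)
  also have "\<dots> = (\<integral>\<^sup>+r. indicator {0..} r * (\<integral>\<^sup>+y. F r y \<partial>clock_space) \<partial>lborel)"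
  proof -
    have "(\<Sum>i. ennreal (erlang_density i 1 r)) = ennreal (indicator {0..} r)" for r
      by (rule suminf_ennreal_eq[OF _ erlang_density_sums]) simp
    then show ?thesis
      by (simp only: ennreal_indicator)
  qed
  finally show ?thesis .
qed

lemma nn_integral_two_births:
  assumes j: "1 \<le> j" "j < j'"
    and [measurable]: "(\<lambda>(a, b). \<phi> a b) \<in> borel_measurable (borel \<Otimes>\<^sub>M borel)"
  shows "(\<integral>\<^sup>+x. \<phi> (birth x j) (birth x j') \<partial>clock_space) =
    (\<integral>\<^sup>+a. \<integral>\<^sup>+b. ennreal (erlang_density (j - 1) 1 a * erlang_density (j' - j - 1) 1 b) * \<phi> a (a + b)
      \<partial>lborel \<partial>lborel)"
proof -
  define D where "D x = (\<Sum>l\<in>{j..<j'}. x ([], l))" for x :: clocks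
  have [measurable]: "D \<in> borel_measurable clock_space"
    unfolding D_def by measurable
  have birth_j': "birth x j' = birth x j + D x" for x
    using j unfolding birth_def D_def by (simp add: lessThan_atLeast0 sum.atLeastLessThan_concat)
  have "{j..<j'} \<noteq> {}"
    using j by simp
  from distributed_sum_root_clocks[OF _ this]
  have D_distributed: "distributed clock_space lborel D (erlang_density (j' - j - 1) 1)"
    by (simp add: D_def[abs_def])
  let ?I = "{([], l) |l. l < j}" and ?J = "{([], l) |l. j \<le> l \<and> l < j'}"
  have "(\<integral>\<^sup>+x. \<phi> (birth x j) (birth x j') \<partial>clock_space) =
      (\<integral>\<^sup>+x. \<phi> (birth x j) (birth x j + D x) \<partial>clock_space)"
    by (simp add: birth_j')
  also have "\<dots> = (\<integral>\<^sup>+x. \<integral>\<^sup>+y. \<phi> (birth x j) (birth x j + D y) \<partial>clock_space \<partial>clock_space)"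
  proof (rule nn_integral_indep_restrict[where I = ?I and J = ?J])
    fix x y :: clocks
    have "birth (restrict x ?I) j = birth x j" "D (restrict y ?J) = D y"
      by (simp_all add: birth_def D_def)
    then show "\<phi> (birth x j) (birth x j + D y) = \<phi> (birth (restrict x ?I) j) (birth (restrict x ?I) j + D (restrict y ?J))"
      by simp
  qed auto
  also have "\<dots> = (\<integral>\<^sup>+x. \<integral>\<^sup>+b. erlang_density (j' - j - 1) 1 b * \<phi> (birth x j) (birth x j + b) \<partial>lborel \<partial>clock_space)"
    by (intro nn_integral_cong distributed_nn_integral[symmetric, OF D_distributed]) measurable
  also have "\<dots> = (\<integral>\<^sup>+a. erlang_density (j - 1) 1 a *
      (\<integral>\<^sup>+b. erlang_density (j' - j - 1) 1 b * \<phi> a (a + b) \<partial>lborel) \<partial>lborel)"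
    by (rule distributed_nn_integral[symmetric, OF distributed_birth[OF j(1)]]) measurable
  also have "\<dots> = (\<integral>\<^sup>+a. \<integral>\<^sup>+b. ennreal (erlang_density (j - 1) 1 a * erlang_density (j' - j - 1) 1 b) * \<phi> a (a + b)
      \<partial>lborel \<partial>lborel)"
    by (intro nn_integral_cong, subst nn_integral_cmult[symmetric])
       (simp_all add: ennreal_mult mult.assoc)
  finally show ?thesis .
qed

lemma nn_integral_two_children:
  assumes j: "1 \<le> j" "j < j'"
    and F[measurable]: "(\<lambda>(r, y). F r y) \<in> borel_measurable (borel \<Otimes>\<^sub>M clock_space)"
    and G[measurable]: "(\<lambda>(r, y). G r y) \<in> borel_measurable (borel \<Otimes>\<^sub>M clock_space)"
  shows "(\<integral>\<^sup>+x. F (birth x j) (subtree j x) * G (birth x j') (subtree j' x) \<partial>clock_space) =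
    (\<integral>\<^sup>+a. \<integral>\<^sup>+b. ennreal (erlang_density (j - 1) 1 a * erlang_density (j' - j - 1) 1 b) *
       ((\<integral>\<^sup>+y. F a y \<partial>clock_space) * (\<integral>\<^sup>+y. G (a + b) y \<partial>clock_space)) \<partial>lborel \<partial>lborel)"
proof -
  define f where "f r = (\<integral>\<^sup>+y. F r y \<partial>clock_space)" for r
  define g where "g r = (\<integral>\<^sup>+y. G r y \<partial>clock_space)" for r
  have [measurable]: "f \<in> borel_measurable borel" "g \<in> borel_measurable borel"
    unfolding f_def g_def by (simp_all add: clock_space.borel_measurable_nn_integral)
  let ?root = "{([], l) |l. True}" and ?sub = "\<lambda>j. {(j # v, l) |v l. True}"
  have restrict_root: "birth (restrict x K) i = birth x i" if "?root \<subseteq> K" for x i K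
    using that unfolding birth_def by (intro sum.cong) auto
  have restrict_sub: "subtree i (restrict x K) = subtree i x" if "?sub i \<subseteq> K" for x i K
    using that by (auto simp: subtree_def fun_eq_iff)
  have "(\<integral>\<^sup>+x. F (birth x j) (subtree j x) * G (birth x j') (subtree j' x) \<partial>clock_space) =
      (\<integral>\<^sup>+x. \<integral>\<^sup>+y. F (birth x j) (subtree j x) * G (birth x j') (subtree j' y) \<partial>clock_space \<partial>clock_space)"
    using j by (intro nn_integral_indep_restrict[where I = "?root \<union> ?sub j" and J = "?sub j'"])
      (auto simp: restrict_root restrict_sub)
  also have "\<dots> = (\<integral>\<^sup>+x. F (birth x j) (subtree j x) * g (birth x j') \<partial>clock_space)"
    by (intro nn_integral_cong, subst nn_integral_cmult)
       (simp_all add: g_def nn_integral_slice_subtree[OF G])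
  also have "\<dots> = (\<integral>\<^sup>+x. \<integral>\<^sup>+y. F (birth x j) (subtree j y) * g (birth x j') \<partial>clock_space \<partial>clock_space)"
    by (intro nn_integral_indep_restrict[where I = ?root and J = "?sub j"])
      (auto simp: restrict_root restrict_sub)
  also have "\<dots> = (\<integral>\<^sup>+x. f (birth x j) * g (birth x j') \<partial>clock_space)"
    by (intro nn_integral_cong, subst nn_integral_multc)
       (simp_all add: f_def nn_integral_slice_subtree[OF F])
  also have "\<dots> = (\<integral>\<^sup>+a. \<integral>\<^sup>+b. ennreal (erlang_density (j - 1) 1 a * erlang_density (j' - j - 1) 1 b) *
      (f a * g (a + b)) \<partial>lborel \<partial>lborel)"
    by (rule nn_integral_two_births[OF j]) measurable
  finally show ?thesis
    by (simp only: f_def g_def)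
qed

lemma nn_integral_sum_ordered_children_pairs:
  assumes F[measurable]: "(\<lambda>(r, y). F r y) \<in> borel_measurable (borel \<Otimes>\<^sub>M clock_space)"
    and G[measurable]: "(\<lambda>(r, y). G r y) \<in> borel_measurable (borel \<Otimes>\<^sub>M clock_space)"
  shows "(\<integral>\<^sup>+x. (\<Sum>i. \<Sum>i'. if i < i' then
        F (birth x (Suc i)) (subtree (Suc i) x) * G (birth x (Suc i')) (subtree (Suc i') x) else 0) \<partial>clock_space) =
    (\<integral>\<^sup>+a. \<integral>\<^sup>+b. indicator {0..} a * indicator {0..} b *
      ((\<integral>\<^sup>+y. F a y \<partial>clock_space) * (\<integral>\<^sup>+y. G (a + b) y \<partial>clock_space)) \<partial>lborel \<partial>lborel)"
proof -
  define \<Phi> where "\<Phi> a b = (\<integral>\<^sup>+y. F a y \<partial>clock_space) * (\<integral>\<^sup>+y. G (a + b) y \<partial>clock_space)" for a b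
  have [measurable]: "(\<lambda>(a, b). \<Phi> a b) \<in> borel_measurable (borel \<Otimes>\<^sub>M borel)"
  proof -
    have "(\<lambda>r. \<integral>\<^sup>+y. F r y \<partial>clock_space) \<in> borel_measurable borel"
      "(\<lambda>r. \<integral>\<^sup>+y. G r y \<partial>clock_space) \<in> borel_measurable borel"
      by (simp_all add: clock_space.borel_measurable_nn_integral)
    then show ?thesis
      unfolding \<Phi>_def by measurable
  qed
  define e where "e i i' a b = ennreal (if i < i' then erlang_density i 1 a * erlang_density (i' - i - 1) 1 b else 0)"
    for i i' :: nat and a b :: real
  have [measurable]: "(\<lambda>(a, b). e i i' a b) \<in> borel_measurable (borel \<Otimes>\<^sub>M borel)" for i i'
    unfolding e_def by measurable
  have pair_term: "(\<integral>\<^sup>+x. (if i < i' then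
        F (birth x (Suc i)) (subtree (Suc i) x) * G (birth x (Suc i')) (subtree (Suc i') x) else 0) \<partial>clock_space) =
      (\<integral>\<^sup>+a. \<integral>\<^sup>+b. e i i' a b * \<Phi> a b \<partial>lborel \<partial>lborel)" for i i'
  proof (cases "i < i'")
    case True
    then show ?thesis
      using nn_integral_two_children[OF _ _ F G, of "Suc i" "Suc i'"] by (simp add: e_def \<Phi>_def)
  qed (simp add: e_def)
  have e_sums: "(\<Sum>i. \<Sum>i'. e i i' a b) = indicator {0..} a * indicator {0..} b" for a b
    unfolding e_def by (rule suminf_erlang_density_pairs)
  have pull_sum: "(\<Sum>n. \<integral>\<^sup>+a. \<integral>\<^sup>+b. c n a b * \<Phi> a b \<partial>lborel \<partial>lborel) =
      (\<integral>\<^sup>+a. \<integral>\<^sup>+b. (\<Sum>n. c n a b) * \<Phi> a b \<partial>lborel \<partial>lborel)"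
    if [measurable]: "\<And>n. (\<lambda>(a, b). c n a b) \<in> borel_measurable (borel \<Otimes>\<^sub>M borel)" for c
    by (simp add: nn_integral_suminf[symmetric] ennreal_suminf_multc)
  have "(\<integral>\<^sup>+x. (\<Sum>i. \<Sum>i'. if i < i' then
        F (birth x (Suc i)) (subtree (Suc i) x) * G (birth x (Suc i')) (subtree (Suc i') x) else 0) \<partial>clock_space) =
      (\<Sum>i. \<Sum>i'. \<integral>\<^sup>+a. \<integral>\<^sup>+b. e i i' a b * \<Phi> a b \<partial>lborel \<partial>lborel)"
    by (simp add: nn_integral_suminf pair_term)
  also have "\<dots> = (\<integral>\<^sup>+a. \<integral>\<^sup>+b. (\<Sum>i. \<Sum>i'. e i i' a b) * \<Phi> a b \<partial>lborel \<partial>lborel)"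
    by (simp add: pull_sum)
  finally show ?thesis
    by (simp add: e_sums \<Phi>_def)
qed

lemma nn_integral_sum_children_mult:
  assumes F[measurable]: "(\<lambda>(r, y). F r y) \<in> borel_measurable (borel \<Otimes>\<^sub>M clock_space)"
    and G[measurable]: "(\<lambda>(r, y). G r y) \<in> borel_measurable (borel \<Otimes>\<^sub>M clock_space)"
  shows "(\<integral>\<^sup>+x. sum_children F x * sum_children G x \<partial>clock_space) =
    (\<integral>\<^sup>+r. indicator {0..} r * (\<integral>\<^sup>+y. F r y * G r y \<partial>clock_space) \<partial>lborel) +
    (\<integral>\<^sup>+a. \<integral>\<^sup>+b. indicator {0..} a * indicator {0..} b *
      ((\<integral>\<^sup>+y. F a y \<partial>clock_space) * (\<integral>\<^sup>+y. G (a + b) y \<partial>clock_space)) \<partial>lborel \<partial>lborel) +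
    (\<integral>\<^sup>+a. \<integral>\<^sup>+b. indicator {0..} a * indicator {0..} b *
      ((\<integral>\<^sup>+y. G a y \<partial>clock_space) * (\<integral>\<^sup>+y. F (a + b) y \<partial>clock_space)) \<partial>lborel \<partial>lborel)"
proof -
  have FG: "(\<lambda>(r, y). F r y * G r y) \<in> borel_measurable (borel \<Otimes>\<^sub>M clock_space)"
    by measurable
  define pairs where "pairs H K x = (\<Sum>i. \<Sum>i'. if i < i' then
      H (birth x (Suc i)) (subtree (Suc i) x) * K (birth x (Suc i')) (subtree (Suc i') x) else 0)"
    for H K :: "real \<Rightarrow> clocks \<Rightarrow> ennreal" and x
  have [measurable]: "pairs F G \<in> borel_measurable clock_space" "pairs G F \<in> borel_measurable clock_space"
    "sum_children (\<lambda>r y. F r y * G r y) \<in> borel_measurable clock_space"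
    unfolding pairs_def using measurable_sum_children[OF FG] by measurable
  have "sum_children F x * sum_children G x =
      sum_children (\<lambda>r y. F r y * G r y) x + pairs F G x + pairs G F x" for x
    unfolding sum_children_def pairs_def by (rule suminf_mult_suminf_ennreal)
  then have "(\<integral>\<^sup>+x. sum_children F x * sum_children G x \<partial>clock_space) =
      (\<integral>\<^sup>+x. sum_children (\<lambda>r y. F r y * G r y) x \<partial>clock_space) +
      (\<integral>\<^sup>+x. pairs F G x \<partial>clock_space) + (\<integral>\<^sup>+x. pairs G F x \<partial>clock_space)"
    by (simp add: nn_integral_add)
  then show ?thesis
    unfolding pairs_def
    by (simp add: nn_integral_sum_children[OF FG] nn_integral_sum_ordered_children_pairs[OF F G]
        nn_integral_sum_ordered_children_pairs[OF G F])
qed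

section \<open>Generation counts and their first two moments\<close>

definition descendants :: "(nat list \<Rightarrow> nat \<Rightarrow> real) \<Rightarrow> nat \<Rightarrow> real \<Rightarrow> nat list set" where
  "descendants y m s = {u. length u = m \<and> (\<forall>i\<in>set u. 1 \<le> i) \<and> cmj_birth y [] u \<le> s}"

lemma cmj_birth_shift: "cmj_birth y v u = cmj_birth (\<lambda>w. y (v @ w)) [] u"
proof (induction u arbitrary: y v)
  case (Cons n u)
  have "cmj_birth (\<lambda>w. y (v @ w)) [n] u = cmj_birth (\<lambda>w. y (v @ [n] @ w)) [] u"
    using Cons.IH[of "\<lambda>w. y (v @ w)" "[n]"] by simp
  moreover have "cmj_birth y (v @ [n]) u = cmj_birth (\<lambda>w. y (v @ [n] @ w)) [] u"
    using Cons.IH[of y "v @ [n]"] by simp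
  ultimately show ?case
    by (simp add: cmj_S_def)
qed simp

lemma cmj_Y_eq_card_descendants: "cmj_Y y [j] m s = real (card (descendants (\<lambda>w. y (j # w)) m s))"
  unfolding cmj_Y_def descendants_def by (subst cmj_birth_shift) simp

lemma emeasure_descendants_Suc:
  "emeasure (count_space UNIV) (descendants y (Suc m) s) =
    (\<Sum>i. emeasure (count_space UNIV) (descendants (\<lambda>w. y (Suc i # w)) m (s - cmj_S y [] (Suc i))))"
proof -
  define A where "A i = (\<lambda>u. Suc i # u) ` descendants (\<lambda>w. y (Suc i # w)) m (s - cmj_S y [] (Suc i))" for i
  have "descendants y (Suc m) s = (\<Union>i. A i)"
  proof (intro set_eqI iffI)
    fix u
    assume "u \<in> descendants y (Suc m) s"
    then obtain n u' where u: "u = n # u'" "1 \<le> n" "u' \<in> descendants (\<lambda>w. y (n # w)) m (s - cmj_S y [] n)"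
      unfolding descendants_def by (cases u) (auto simp: cmj_birth_shift[of y "[_]"])
    then obtain i where "n = Suc i"
      using not0_implies_Suc by fastforce
    with u show "u \<in> (\<Union>i. A i)"
      unfolding A_def by blast
  next
    fix u
    assume "u \<in> (\<Union>i. A i)"
    then show "u \<in> descendants y (Suc m) s"
      unfolding A_def descendants_def by (auto simp: cmj_birth_shift[of y "[_]"])
  qed
  moreover have "disjoint_family A"
    unfolding disjoint_family_on_def A_def by auto
  moreover have "emeasure (count_space UNIV) (A i) =
      emeasure (count_space UNIV) (descendants (\<lambda>w. y (Suc i # w)) m (s - cmj_S y [] (Suc i)))" for i
  proof -
    have "inj_on (Cons (Suc i)) B" for B
      by simp
    then show ?thesis
      unfolding A_def by (simp add: emeasure_count_space finite_image_iff card_image)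
  qed
  ultimately show ?thesis
    using suminf_emeasure[of A "count_space UNIV"] by simp
qed

lemma curry_subtree: "curry (subtree j x) = (\<lambda>w. curry x (j # w))"
  by (simp add: subtree_def fun_eq_iff)

lemma cmj_S_curry: "cmj_S (curry x) [] j = birth x j"
  by (simp add: cmj_S_def birth_def)

fun gen_count :: "nat \<Rightarrow> clocks \<Rightarrow> real \<Rightarrow> ennreal" where
  "gen_count 0 x s = indicator {0..} s"
| "gen_count (Suc m) x s = sum_children (\<lambda>r y. gen_count m y (s - r)) x"

lemma gen_count_eq_emeasure: "gen_count m x s = emeasure (count_space UNIV) (descendants (curry x) m s)"
proof (induction m arbitrary: x s)
  case 0
  have "descendants y 0 s = (if 0 \<le> s then {[]} else {})" for y
    by (auto simp: descendants_def)
  then show ?case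
    by simp
next
  case (Suc m)
  show ?case
    unfolding gen_count.simps sum_children_def Suc.IH emeasure_descendants_Suc curry_subtree cmj_S_curry ..
qed

lemma measurable_gen_count [measurable]:
  "(\<lambda>(s, x). gen_count m x s) \<in> borel_measurable (borel \<Otimes>\<^sub>M clock_space)"
proof (induction m)
  case (Suc m)
  note Suc.IH [measurable]
  show ?case
    unfolding gen_count.simps sum_children_def by measurable
qed simp

lemma measurable_gen_count_shift:
  "(\<lambda>(r, y). gen_count m y (s - r)) \<in> borel_measurable (borel \<Otimes>\<^sub>M clock_space)"
proof -
  have "(\<lambda>(r, y). (s - r, y)) \<in> measurable (borel \<Otimes>\<^sub>M clock_space) (borel \<Otimes>\<^sub>M clock_space)"
    by measurable
  from measurable_comp[OF this measurable_gen_count] show ?thesis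
    by (simp add: o_def split_beta)
qed

definition mean_count :: "nat \<Rightarrow> real \<Rightarrow> real" where
  "mean_count m s = indicator {0..} s * s ^ m / fact m"

lemma mean_count_nonneg: "0 \<le> mean_count m s"
  by (simp add: mean_count_def indicator_def)

lemma measurable_mean_count [measurable]: "mean_count m \<in> borel_measurable borel"
  unfolding mean_count_def by measurable

lemma nn_integral_mean_count_conv:
  "(\<integral>\<^sup>+r. indicator {0..} r * ennreal (mean_count m (s - r)) \<partial>lborel) = ennreal (mean_count (Suc m) s)"
proof (cases "0 \<le> s")
  case True
  have "(\<integral>\<^sup>+r. indicator {0..} r * ennreal (mean_count m (s - r)) \<partial>lborel) =
      (\<integral>\<^sup>+r. ennreal (1 / fact m * (s - r) ^ m) * indicator {0..s} r \<partial>lborel)"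
    by (intro nn_integral_cong) (auto simp: mean_count_def indicator_def)
  also have "\<dots> = ennreal (mean_count (Suc m) s)"
    using True by (subst nn_integral_Icc_power_diff) (auto simp: mean_count_def)
  finally show ?thesis .
next
  case False
  then have vanish: "indicator {0..} r * ennreal (mean_count m (s - r)) = 0" for r
    by (auto simp: mean_count_def indicator_def)
  show ?thesis
    using False by (simp only: vanish) (simp add: mean_count_def)
qed

lemma nn_integral_gen_count: "(\<integral>\<^sup>+x. gen_count m x s \<partial>clock_space) = ennreal (mean_count m s)"
proof (induction m arbitrary: s)
  case 0
  then show ?case
    by (simp add: mean_count_def clock_space.emeasure_space_1 ennreal_indicator)
next
  case (Suc m)
  then show ?case
    by (simp add: nn_integral_sum_children nn_integral_mean_count_conv)
qed

definition moment_coeff :: "nat \<Rightarrow> nat \<Rightarrow> real" where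
  "moment_coeff m i = fact (2 * (m - i)) / (fact (m - i) ^ 2 * fact (2 * m - i))"

definition second_moment :: "nat \<Rightarrow> real \<Rightarrow> real" where
  "second_moment m s = (\<Sum>i\<le>m. moment_coeff m i * s ^ (2 * m - i))"

lemma moment_coeff_nonneg: "0 \<le> moment_coeff m i"
  by (simp add: moment_coeff_def)

lemma second_moment_nonneg: "0 \<le> s \<Longrightarrow> 0 \<le> second_moment m s"
  unfolding second_moment_def by (intro sum_nonneg mult_nonneg_nonneg moment_coeff_nonneg zero_le_power)

lemma second_moment_Suc:
  "second_moment (Suc m) s =
    (\<Sum>i\<le>m. moment_coeff m i * s ^ Suc (2 * m - i) / Suc (2 * m - i)) + s ^ (2 * m + 2) / fact (Suc m) ^ 2"
proof -
  have "second_moment (Suc m) s = moment_coeff (Suc m) 0 * s ^ (2 * Suc m) +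
      (\<Sum>i\<le>m. moment_coeff (Suc m) (Suc i) * s ^ (2 * Suc m - Suc i))"
    unfolding second_moment_def by (subst sum.atMost_Suc_shift) simp
  also have "moment_coeff (Suc m) 0 = 1 / fact (Suc m) ^ 2"
    by (simp add: moment_coeff_def)
  also have "(\<Sum>i\<le>m. moment_coeff (Suc m) (Suc i) * s ^ (2 * Suc m - Suc i)) =
      (\<Sum>i\<le>m. moment_coeff m i * s ^ Suc (2 * m - i) / Suc (2 * m - i))"
  proof (intro sum.cong refl)
    fix i
    assume "i \<in> {..m}"
    then have i: "2 * Suc m - Suc i = Suc (2 * m - i)"
      by simp
    have "moment_coeff (Suc m) (Suc i) = moment_coeff m i / Suc (2 * m - i)"
      unfolding moment_coeff_def i by (simp add: field_simps)
    then show "moment_coeff (Suc m) (Suc i) * s ^ (2 * Suc m - Suc i) =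
        moment_coeff m i * s ^ Suc (2 * m - i) / Suc (2 * m - i)"
      by (simp only: i times_divide_eq_left)
  qed
  finally show ?thesis
    by simp
qed

lemma nn_integral_second_moment_conv:
  "(\<integral>\<^sup>+r. indicator {0..} r * ennreal (indicator {0..} (s - r) * second_moment m (s - r)) \<partial>lborel) =
    ennreal (indicator {0..} s * (\<Sum>i\<le>m. moment_coeff m i * s ^ Suc (2 * m - i) / Suc (2 * m - i)))"
proof (cases "0 \<le> s")
  case True
  have pointwise: "indicator {0..} r * ennreal (indicator {0..} (s - r) * second_moment m (s - r)) =
      (\<Sum>i\<le>m. ennreal (moment_coeff m i * (s - r) ^ (2 * m - i)) * indicator {0..s} r)" for r
  proof (cases "r \<in> {0..s}")
    case True
    then have "(\<Sum>i\<le>m. ennreal (moment_coeff m i * (s - r) ^ (2 * m - i))) = ennreal (second_moment m (s - r))"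
      unfolding second_moment_def by (intro sum_ennreal) (simp add: moment_coeff_nonneg)
    with True show ?thesis
      by (simp add: sum_distrib_right[symmetric])
  qed (auto simp: indicator_def)
  have "(\<integral>\<^sup>+r. indicator {0..} r * ennreal (indicator {0..} (s - r) * second_moment m (s - r)) \<partial>lborel) =
      (\<Sum>i\<le>m. \<integral>\<^sup>+r. ennreal (moment_coeff m i * (s - r) ^ (2 * m - i)) * indicator {0..s} r \<partial>lborel)"
    unfolding pointwise by (rule nn_integral_sum) measurable
  also have "\<dots> = (\<Sum>i\<le>m. ennreal (moment_coeff m i * s ^ Suc (2 * m - i) / Suc (2 * m - i)))"
    using True by (intro sum.cong refl nn_integral_Icc_power_diff moment_coeff_nonneg)
  also have "\<dots> = ennreal (\<Sum>i\<le>m. moment_coeff m i * s ^ Suc (2 * m - i) / Suc (2 * m - i))"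
    using True by (intro sum_ennreal) (simp add: moment_coeff_nonneg)
  finally show ?thesis
    using True by simp
next
  case False
  then have vanish: "indicator {0..} r * ennreal (indicator {0..} (s - r) * second_moment m (s - r)) = 0" for r
    by (simp add: indicator_def)
  show ?thesis
    using False by (simp only: vanish) simp
qed

lemma nn_integral_mean_count_pair_slice:
  "(\<integral>\<^sup>+b. indicator {0..} a * indicator {0..} b *
      (ennreal (mean_count m (s - a)) * ennreal (mean_count m (s - (a + b)))) \<partial>lborel) =
    ennreal (1 / (fact m * fact (Suc m)) * (s - a) ^ (2 * m + 1)) * indicator {0..s} a"
proof -
  have "(\<integral>\<^sup>+b. indicator {0..} a * indicator {0..} b *
      (ennreal (mean_count m (s - a)) * ennreal (mean_count m (s - (a + b)))) \<partial>lborel) =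
      indicator {0..} a * ennreal (mean_count m (s - a)) *
      (\<integral>\<^sup>+b. indicator {0..} b * ennreal (mean_count m ((s - a) - b)) \<partial>lborel)"
    by (subst nn_integral_cmult[symmetric]) (simp_all add: ac_simps diff_diff_eq)
  also have "\<dots> = indicator {0..} a * ennreal (mean_count m (s - a) * mean_count (Suc m) (s - a))"
    by (simp add: nn_integral_mean_count_conv ennreal_mult' mean_count_nonneg mult.assoc)
  also have "\<dots> = ennreal (1 / (fact m * fact (Suc m)) * (s - a) ^ (2 * m + 1)) * indicator {0..s} a"
    by (auto simp: mean_count_def indicator_def power_add[symmetric] mult_2)
  finally show ?thesis .
qed

lemma nn_integral_mean_count_pairs:
  "(\<integral>\<^sup>+a. \<integral>\<^sup>+b. indicator {0..} a * indicator {0..} b *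
      (ennreal (mean_count m (s - a)) * ennreal (mean_count m (s - (a + b)))) \<partial>lborel \<partial>lborel) =
    ennreal (indicator {0..} s * (s ^ (2 * m + 2) / fact (Suc m) ^ 2 / 2))"
proof -
  define c :: real where "c = 1 / (fact m * fact (Suc m))"
  have "(\<integral>\<^sup>+a. \<integral>\<^sup>+b. indicator {0..} a * indicator {0..} b *
      (ennreal (mean_count m (s - a)) * ennreal (mean_count m (s - (a + b)))) \<partial>lborel \<partial>lborel) =
      (\<integral>\<^sup>+a. ennreal (c * (s - a) ^ (2 * m + 1)) * indicator {0..s} a \<partial>lborel)"
    by (simp only: nn_integral_mean_count_pair_slice c_def)
  also have "\<dots> = ennreal (indicator {0..} s * (s ^ (2 * m + 2) / fact (Suc m) ^ 2 / 2))"
  proof (cases "0 \<le> s")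
    case True
    have field: "1 / (F * (k * F)) * X / (2 * k) = X / (k * F) ^ 2 / 2" if "F > 0" "k > 0" for F k X :: real
      using that by (simp add: field_simps power2_eq_square)
    have "real (Suc (2 * m + 1)) = 2 * real (Suc m)" "fact (Suc m) = real (Suc m) * fact m"
      "s ^ Suc (2 * m + 1) = s ^ (2 * m + 2)"
      by simp_all
    then have "c * s ^ Suc (2 * m + 1) / Suc (2 * m + 1) = s ^ (2 * m + 2) / fact (Suc m) ^ 2 / 2"
      unfolding c_def by (simp only:) (rule field, simp_all)
    moreover have "(\<integral>\<^sup>+a. ennreal (c * (s - a) ^ (2 * m + 1)) * indicator {0..s} a \<partial>lborel) =
        ennreal (c * s ^ Suc (2 * m + 1) / Suc (2 * m + 1))"
      using True by (intro nn_integral_Icc_power_diff) (simp_all add: c_def)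
    ultimately show ?thesis
      using True by simp
  next
    case False
    then have "indicator {0..s} a = (0 :: ennreal)" for a
      by (simp add: indicator_def)
    with False show ?thesis
      by simp
  qed
  finally show ?thesis .
qed

lemma nn_integral_sum_children_sq:
  assumes F[measurable]: "(\<lambda>(r, y). F r y) \<in> borel_measurable (borel \<Otimes>\<^sub>M clock_space)"
    and mean: "\<And>r. (\<integral>\<^sup>+y. F r y \<partial>clock_space) = ennreal (mean_count m (s - r))"
    and sq: "\<And>r. (\<integral>\<^sup>+y. F r y ^ 2 \<partial>clock_space) = ennreal (indicator {0..} (s - r) * second_moment m (s - r))"
  shows "(\<integral>\<^sup>+x. sum_children F x ^ 2 \<partial>clock_space) = ennreal (indicator {0..} s * second_moment (Suc m) s)"
proof -
  define A where "A = (\<Sum>i\<le>m. moment_coeff m i * s ^ Suc (2 * m - i) / Suc (2 * m - i))"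
  define B where "B = s ^ (2 * m + 2) / fact (Suc m) ^ 2 / 2"
  have diagonal: "(\<integral>\<^sup>+r. indicator {0..} r * (\<integral>\<^sup>+y. F r y * F r y \<partial>clock_space) \<partial>lborel) =
      ennreal (indicator {0..} s * A)"
    unfolding sq[unfolded power2_eq_square] A_def by (rule nn_integral_second_moment_conv)
  have pairs: "(\<integral>\<^sup>+a. \<integral>\<^sup>+b. indicator {0..} a * indicator {0..} b *
      ((\<integral>\<^sup>+y. F a y \<partial>clock_space) * (\<integral>\<^sup>+y. F (a + b) y \<partial>clock_space)) \<partial>lborel \<partial>lborel) =
      ennreal (indicator {0..} s * B)"
    unfolding mean B_def by (rule nn_integral_mean_count_pairs)
  have "(\<integral>\<^sup>+x. sum_children F x ^ 2 \<partial>clock_space) =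
      ennreal (indicator {0..} s * A) + ennreal (indicator {0..} s * B) + ennreal (indicator {0..} s * B)"
    unfolding power2_eq_square nn_integral_sum_children_mult[OF F F] diagonal pairs ..
  also have "\<dots> = ennreal (indicator {0..} s * second_moment (Suc m) s)"
  proof (cases "0 \<le> s")
    case True
    then have "0 \<le> A" "0 \<le> B"
      unfolding A_def B_def by (auto intro!: sum_nonneg divide_nonneg_nonneg mult_nonneg_nonneg moment_coeff_nonneg)
    then have "ennreal A + ennreal B + ennreal B = ennreal (A + B + B)"
      by (simp only: ennreal_plus add_nonneg_nonneg)
    also have "A + B + B = second_moment (Suc m) s"
      unfolding A_def B_def second_moment_Suc by (simp only: add.assoc field_sum_of_halves)
    finally show ?thesis
      using True by simp
  qed simp
  finally show ?thesis .
qed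

lemma nn_integral_gen_count_sq:
  "(\<integral>\<^sup>+x. gen_count m x s ^ 2 \<partial>clock_space) = ennreal (indicator {0..} s * second_moment m s)"
proof (induction m arbitrary: s)
  case 0
  have "gen_count 0 x s ^ 2 = indicator {0..} s" for x
    by (simp add: indicator_def)
  then show ?case
    by (simp add: clock_space.emeasure_space_1 ennreal_indicator second_moment_def moment_coeff_def)
next
  case (Suc m)
  show ?case
    unfolding gen_count.simps
    by (rule nn_integral_sum_children_sq[OF measurable_gen_count_shift nn_integral_gen_count Suc.IH])
qed

section \<open>The centred sum over the first generation\<close>

definition cross_moment :: "nat \<Rightarrow> real \<Rightarrow> real" where
  "cross_moment m t = t ^ (2 * m + 1) / (fact m ^ 2 * (2 * m + 1)) + t ^ (2 * m + 2) / fact (Suc m) ^ 2"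

lemma nn_integral_sum_children_mult_mean:
  assumes F[measurable]: "(\<lambda>(r, y). F r y) \<in> borel_measurable (borel \<Otimes>\<^sub>M clock_space)"
    and mean: "\<And>r. (\<integral>\<^sup>+y. F r y \<partial>clock_space) = ennreal (mean_count m (t - r))"
    and t: "0 \<le> t"
  shows "(\<integral>\<^sup>+x. sum_children F x * sum_children (\<lambda>r y. ennreal (mean_count m (t - r))) x \<partial>clock_space) =
    ennreal (cross_moment m t)"
proof -
  have G: "(\<lambda>(r, y::clocks). ennreal (mean_count m (t - r))) \<in> borel_measurable (borel \<Otimes>\<^sub>M clock_space)"
    by measurable
  have mean_sq: "indicator {0..} r * (ennreal (mean_count m (t - r)) * ennreal (mean_count m (t - r))) =
      ennreal (1 / fact m ^ 2 * (t - r) ^ (2 * m)) * indicator {0..t} r" for r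
    by (auto simp: mean_count_def indicator_def ennreal_mult''[symmetric] power2_eq_square power_add[symmetric] mult_2)
  have diagonal: "(\<integral>\<^sup>+r. indicator {0..} r * (\<integral>\<^sup>+y. F r y * ennreal (mean_count m (t - r)) \<partial>clock_space) \<partial>lborel) =
      ennreal (t ^ (2 * m + 1) / (fact m ^ 2 * (2 * m + 1)))"
  proof -
    have "(\<integral>\<^sup>+y. F r y * ennreal (mean_count m (t - r)) \<partial>clock_space) =
        ennreal (mean_count m (t - r)) * ennreal (mean_count m (t - r))" for r
      using measurable_slice[OF F] by (simp add: nn_integral_multc mean)
    then have "(\<integral>\<^sup>+r. indicator {0..} r * (\<integral>\<^sup>+y. F r y * ennreal (mean_count m (t - r)) \<partial>clock_space) \<partial>lborel) =
        (\<integral>\<^sup>+r. ennreal (1 / fact m ^ 2 * (t - r) ^ (2 * m)) * indicator {0..t} r \<partial>lborel)"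
      by (simp add: mean_sq)
    also have "\<dots> = ennreal (1 / fact m ^ 2 * t ^ Suc (2 * m) / Suc (2 * m))"
      using t by (intro nn_integral_Icc_power_diff) simp_all
    finally show ?thesis
      by (simp add: ring_distribs)
  qed
  have pairs: "(\<integral>\<^sup>+a. \<integral>\<^sup>+b. indicator {0..} a * indicator {0..} b *
      (ennreal (mean_count m (t - a)) * ennreal (mean_count m (t - (a + b)))) \<partial>lborel \<partial>lborel) =
      ennreal (t ^ (2 * m + 2) / fact (Suc m) ^ 2 / 2)"
    using t by (simp add: nn_integral_mean_count_pairs)
  have "0 \<le> t ^ (2 * m + 1) / (fact m ^ 2 * (2 * m + 1))" "0 \<le> t ^ (2 * m + 2) / fact (Suc m) ^ 2 / 2"
    using t by simp_all
  then show ?thesis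
    using nn_integral_sum_children_mult[OF F G] diagonal pairs
    by (simp add: mean clock_space.emeasure_space_1 cross_moment_def ennreal_plus[symmetric] add.assoc
        del: ennreal_plus)
qed

(* The indicator is redundant for nonnegative clocks; with it, sq_deviation_eq holds pointwise. *)
definition count_sum :: "nat \<Rightarrow> real \<Rightarrow> clocks \<Rightarrow> ennreal" where
  "count_sum m t = sum_children (\<lambda>r y. indicator {..t} r * gen_count m y (t - r))"

definition mean_sum :: "nat \<Rightarrow> real \<Rightarrow> clocks \<Rightarrow> ennreal" where
  "mean_sum m t = sum_children (\<lambda>r y. ennreal (mean_count m (t - r)))"

lemma measurable_count_sum_term:
  "(\<lambda>(r, y). indicator {..t} r * gen_count m y (t - r)) \<in> borel_measurable (borel \<Otimes>\<^sub>M clock_space)"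
  using measurable_gen_count_shift by measurable

lemma measurable_count_sum [measurable]: "count_sum m t \<in> borel_measurable clock_space"
  unfolding count_sum_def by (rule measurable_sum_children[OF measurable_count_sum_term])

lemma measurable_mean_sum [measurable]: "mean_sum m t \<in> borel_measurable clock_space"
  unfolding mean_sum_def by (rule measurable_sum_children) measurable

lemma nn_integral_count_sum_term:
  "(\<integral>\<^sup>+y. indicator {..t} r * gen_count m y (t - r) \<partial>clock_space) = ennreal (mean_count m (t - r))"
  by (cases "r \<le> t") (simp_all add: nn_integral_cmult nn_integral_gen_count mean_count_def)

lemma nn_integral_count_sum_sq:
  assumes "0 \<le> t"
  shows "(\<integral>\<^sup>+x. count_sum m t x ^ 2 \<partial>clock_space) = ennreal (second_moment (Suc m) t)"
proof -
  have "(\<integral>\<^sup>+y. (indicator {..t} r * gen_count m y (t - r)) ^ 2 \<partial>clock_space) =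
      ennreal (indicator {0..} (t - r) * second_moment m (t - r))" for r
    by (cases "r \<le> t") (simp_all add: power_mult_distrib nn_integral_gen_count_sq indicator_def)
  with assms show ?thesis
    unfolding count_sum_def
    by (simp add: nn_integral_sum_children_sq[OF measurable_count_sum_term nn_integral_count_sum_term])
qed

lemma nn_integral_count_sum_mean_sum:
  "0 \<le> t \<Longrightarrow> (\<integral>\<^sup>+x. count_sum m t x * mean_sum m t x \<partial>clock_space) = ennreal (cross_moment m t)"
  unfolding count_sum_def mean_sum_def
  by (rule nn_integral_sum_children_mult_mean[OF measurable_count_sum_term nn_integral_count_sum_term])

lemma nn_integral_mean_sum_sq:
  "0 \<le> t \<Longrightarrow> (\<integral>\<^sup>+x. mean_sum m t x * mean_sum m t x \<partial>clock_space) = ennreal (cross_moment m t)"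
  unfolding mean_sum_def
  by (rule nn_integral_sum_children_mult_mean) (simp_all add: clock_space.emeasure_space_1)

lemma has_bochner_integral_count_sum_mean_sum:
  assumes t: "0 \<le> t"
  shows "has_bochner_integral clock_space (\<lambda>x. (enn2real (count_sum m t x) - enn2real (mean_sum m t x)) ^ 2)
    (second_moment (Suc m) t - cross_moment m t)"
proof -
  have YY: "(\<integral>\<^sup>+x. count_sum m t x * count_sum m t x \<partial>clock_space) = ennreal (second_moment (Suc m) t)"
    using nn_integral_count_sum_sq[OF t] by (simp add: power2_eq_square)
  have YA: "(\<integral>\<^sup>+x. count_sum m t x * mean_sum m t x \<partial>clock_space) = ennreal (cross_moment m t)"
    and AA: "(\<integral>\<^sup>+x. mean_sum m t x * mean_sum m t x \<partial>clock_space) = ennreal (cross_moment m t)"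
    using t by (rule nn_integral_count_sum_mean_sum, rule nn_integral_mean_sum_sq)
  have Y_fin: "AE x in clock_space. count_sum m t x < \<top>"
    by (rule AE_finite_of_nn_integral_mult_self[OF _ YY]) simp
  have A_fin: "AE x in clock_space. mean_sum m t x < \<top>"
    by (rule AE_finite_of_nn_integral_mult_self[OF _ AA]) simp
  have nonneg: "0 \<le> second_moment (Suc m) t" "0 \<le> cross_moment m t"
    using t by (simp_all add: second_moment_nonneg cross_moment_def)
  have "has_bochner_integral clock_space
      (\<lambda>x. enn2real (count_sum m t x) * enn2real (count_sum m t x)
        - 2 * (enn2real (count_sum m t x) * enn2real (mean_sum m t x))
        + enn2real (mean_sum m t x) * enn2real (mean_sum m t x))
      (second_moment (Suc m) t - 2 * cross_moment m t + cross_moment m t)"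
    using Y_fin A_fin nonneg
    by (intro has_bochner_integral_add has_bochner_integral_diff has_bochner_integral_mult_right
        has_bochner_integral_enn2real_mult YY YA AA) simp_all
  then show ?thesis
    by (simp add: power2_eq_square algebra_simps)
qed

definition sq_deviation :: "nat \<Rightarrow> real \<Rightarrow> clocks \<Rightarrow> real" where
  "sq_deviation m t x = (\<Sum>j | 1 \<le> j \<and> cmj_S (curry x) [] j \<le> t.
      cmj_Y (curry x) [j] m (t - cmj_S (curry x) [] j) - cmj_U m (t - cmj_S (curry x) [] j)) ^ 2"

(* Infinite descendant sets are harmless: card gives 0 and so does enn2real of infinity. *)
lemma cmj_Y_curry: "cmj_Y (curry x) [j] m s = enn2real (gen_count m (subtree j x) s)"
  by (simp add: cmj_Y_eq_card_descendants gen_count_eq_emeasure curry_subtree emeasure_count_space)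

lemma sq_deviation_eq_gen_count:
  "sq_deviation m t x = (\<Sum>j | 1 \<le> j \<and> birth x j \<le> t.
      enn2real (gen_count m (subtree j x) (t - birth x j)) - cmj_U m (t - birth x j)) ^ 2"
  unfolding sq_deviation_def cmj_S_curry cmj_Y_curry ..

lemma measurable_sq_deviation: "sq_deviation m t \<in> borel_measurable clock_space"
proof -
  have "(\<lambda>x. gen_count m (subtree j x) (t - birth x j)) \<in> borel_measurable clock_space" for j
    by measurable
  then have "(\<lambda>x. \<Sum>j | 1 \<le> j \<and> birth x j \<le> t.
      enn2real (gen_count m (subtree j x) (t - birth x j)) - cmj_U m (t - birth x j)) \<in> borel_measurable clock_space"
    unfolding cmj_U_def by (intro borel_measurable_sum_Collect) measurable
  then show ?thesis
    unfolding sq_deviation_eq_gen_count[abs_def] by measurable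
qed

definition births_before :: "real \<Rightarrow> clocks \<Rightarrow> ennreal" where
  "births_before t = sum_children (\<lambda>r y. indicator {..t} r)"

lemma measurable_births_before [measurable]: "births_before t \<in> borel_measurable clock_space"
  unfolding births_before_def by (rule measurable_sum_children) measurable

lemma nn_integral_births_before:
  assumes "0 \<le> t"
  shows "(\<integral>\<^sup>+x. births_before t x \<partial>clock_space) = ennreal t"
proof -
  have "(\<integral>\<^sup>+x. births_before t x \<partial>clock_space) = (\<integral>\<^sup>+r. indicator {0..} r * indicator {..t} r \<partial>lborel)"
    unfolding births_before_def by (subst nn_integral_sum_children) (simp_all add: clock_space.emeasure_space_1)
  also have "\<dots> = (\<integral>\<^sup>+r. indicator {0..t} r \<partial>lborel)"
    by (intro nn_integral_cong) (simp add: indicator_def)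
  finally show ?thesis
    using assms by simp
qed

lemma finite_births_before:
  assumes "births_before t x \<noteq> \<infinity>"
  shows "finite {j. 1 \<le> j \<and> birth x j \<le> t}"
proof -
  have "births_before t x = (\<integral>\<^sup>+i. indicator {i. birth x (Suc i) \<le> t} i \<partial>count_space UNIV)"
    unfolding births_before_def sum_children_def nn_integral_count_space_nat[symmetric]
    by (simp add: indicator_def)
  also have "\<dots> = emeasure (count_space UNIV) {i. birth x (Suc i) \<le> t}"
    by simp
  finally have "emeasure (count_space UNIV) {i. birth x (Suc i) \<le> t} \<noteq> \<infinity>"
    using assms by simp
  then have "finite {i. birth x (Suc i) \<le> t}"
    by (metis emeasure_count_space_infinite subset_UNIV)
  moreover have "{j. 1 \<le> j \<and> birth x j \<le> t} = Suc ` {i. birth x (Suc i) \<le> t}"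
    by (auto simp: image_iff Suc_le_eq gr0_conv_Suc)
  ultimately show ?thesis
    by simp
qed

lemma sq_deviation_eq:
  assumes fin: "finite {j. 1 \<le> j \<and> birth x j \<le> t}" and count_fin: "count_sum m t x < \<top>"
  shows "sq_deviation m t x = (enn2real (count_sum m t x) - enn2real (mean_sum m t x)) ^ 2"
proof -
  define J where "J = {j. 1 \<le> j \<and> birth x j \<le> t}"
  have finJ: "finite J"
    using fin by (simp add: J_def)
  define y where "y j = gen_count m (subtree j x) (t - birth x j)" for j
  have count_sum_eq: "count_sum m t x = (\<Sum>j\<in>J. y j)"
  proof -
    have "count_sum m t x = (\<Sum>j\<in>J. indicator {..t} (birth x j) * y j)"
      unfolding count_sum_def sum_children_def y_def
      by (rule suminf_Suc_eq_sum[OF finJ, of "\<lambda>j. indicator {..t} (birth x j) * y j", unfolded y_def])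
        (auto simp: J_def)
    then show ?thesis
      by (simp add: J_def)
  qed
  have y_fin: "y j < \<top>" if "j \<in> J" for j
    using count_fin member_le_sum[of j J y] that finJ unfolding count_sum_eq
    by (auto simp: top.not_eq_extremum)
  have mean_sum_eq: "mean_sum m t x = ennreal (\<Sum>j\<in>J. mean_count m (t - birth x j))"
  proof -
    have "mean_sum m t x = (\<Sum>j\<in>J. ennreal (mean_count m (t - birth x j)))"
      unfolding mean_sum_def sum_children_def
      by (rule suminf_Suc_eq_sum[OF finJ]) (auto simp: J_def mean_count_def)
    then show ?thesis
      by (simp add: sum_ennreal mean_count_nonneg)
  qed
  have "sq_deviation m t x = (\<Sum>j\<in>J. enn2real (y j) - mean_count m (t - birth x j)) ^ 2"
    unfolding sq_deviation_eq_gen_count J_def y_def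
    by (intro arg_cong[where f = "\<lambda>z. z ^ 2"] sum.cong) (auto simp: mean_count_def cmj_U_def)
  also have "\<dots> = (enn2real (count_sum m t x) - enn2real (mean_sum m t x)) ^ 2"
    by (simp add: count_sum_eq mean_sum_eq enn2real_sum y_fin sum_subtractf sum_nonneg mean_count_nonneg)
  finally show ?thesis .
qed

lemma integral_sq_deviation:
  assumes t: "0 \<le> t"
  shows "integral\<^sup>L clock_space (sq_deviation m t) = second_moment (Suc m) t - cross_moment m t"
proof -
  have "AE x in clock_space. count_sum m t x ^ 2 \<noteq> \<infinity>"
    by (rule nn_integral_PInf_AE) (simp_all add: nn_integral_count_sum_sq[OF t])
  then have count_fin: "AE x in clock_space. count_sum m t x < \<top>"
    by (auto simp: power_eq_top_ennreal top.not_eq_extremum)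
  have "AE x in clock_space. births_before t x \<noteq> \<infinity>"
    by (rule nn_integral_PInf_AE)
       (simp_all add: nn_integral_births_before[OF t])
  with count_fin have "AE x in clock_space.
      sq_deviation m t x = (enn2real (count_sum m t x) - enn2real (mean_sum m t x)) ^ 2"
    by eventually_elim (intro sq_deviation_eq finite_births_before)
  then have "integral\<^sup>L clock_space (sq_deviation m t) =
      integral\<^sup>L clock_space (\<lambda>x. (enn2real (count_sum m t x) - enn2real (mean_sum m t x)) ^ 2)"
    by (intro integral_cong_AE measurable_sq_deviation) simp_all
  also have "\<dots> = second_moment (Suc m) t - cross_moment m t"
    by (rule has_bochner_integral_integral_eq[OF has_bochner_integral_count_sum_mean_sum[OF t]])
  finally show ?thesis .
qed

section \<open>Asymptotics\<close>

lemma second_moment_Suc_minus_cross_moment: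
  "second_moment (Suc m) t - cross_moment m t = (\<Sum>n<m. moment_coeff (Suc m) (n + 2) * t ^ (2 * m - n))"
proof -
  have "second_moment (Suc m) t = moment_coeff (Suc m) 0 * t ^ (2 * m + 2) +
      moment_coeff (Suc m) 1 * t ^ (2 * m + 1) + (\<Sum>n<m. moment_coeff (Suc m) (n + 2) * t ^ (2 * m - n))"
    unfolding second_moment_def atMost_Suc lessThan_Suc_atMost[symmetric]
    by (simp add: sum.lessThan_Suc_shift add.assoc del: sum.lessThan_Suc)
  moreover have "moment_coeff (Suc m) 0 = 1 / fact (Suc m) ^ 2"
    "moment_coeff (Suc m) 1 = 1 / (fact m ^ 2 * (2 * m + 1))"
    by (simp_all add: moment_coeff_def distrib_left)
  ultimately show ?thesis
    by (simp add: cross_moment_def)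
qed

lemma moment_coeff_Suc_le:
  assumes "i < k"
  shows "moment_coeff k (Suc i) \<le> real k * moment_coeff k i"
proof -
  obtain p where p: "k - i = Suc p"
    using assms by (metis Suc_diff_Suc)
  obtain q where q: "2 * k - i = Suc q"
    using assms by (metis Suc_diff_Suc less_le_trans mult_2 le_add1 nat_less_le)
  have shifted: "k - Suc i = p" "2 * k - Suc i = q" "2 * (k - i) = Suc (Suc (2 * p))" "2 * (k - Suc i) = 2 * p"
    using p q by auto
  define A B C where "A = (fact (2 * p) :: real)" and "B = (fact p :: real)" and "C = (fact q :: real)"
  have pos: "0 < A" "0 < B" "0 < C"
    by (auto simp: A_def B_def C_def)
  have "q + 1 \<le> 2 * k"
    using q by linarith
  then have "(real p + 1) * (real q + 1) \<le> (2 * real p + 1) * (2 * real k)"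
    by (intro mult_mono) auto
  then have "(real p + 1) * ((real p + 1) * (real q + 1)) \<le> (real p + 1) * ((2 * real p + 1) * (2 * real k))"
    by (intro mult_left_mono) auto
  then have bound: "(real p + 1) ^ 2 * (real q + 1) \<le> real k * (2 * p + 2) * (2 * p + 1)"
    by (simp add: power2_eq_square algebra_simps)
  define R where "R = real k * (2 * p + 2) * (2 * p + 1) / ((real p + 1) ^ 2 * (real q + 1))"
  have ratio: "1 \<le> R"
    unfolding R_def using bound by (simp add: le_divide_eq)
  have "moment_coeff k (Suc i) = A / (B ^ 2 * C)"
    unfolding moment_coeff_def shifted A_def B_def C_def ..
  also have "\<dots> \<le> A / (B ^ 2 * C) * R"
    using mult_left_mono[OF ratio, of "A / (B ^ 2 * C)"] pos by simp
  also have "\<dots> = real k * ((2 * p + 2) * (2 * p + 1) * A / (((p + 1) * B) ^ 2 * ((q + 1) * C)))"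
    unfolding R_def by (simp add: field_simps power2_eq_square)
  also have "\<dots> = real k * moment_coeff k i"
    unfolding moment_coeff_def p q shifted A_def B_def C_def by (simp add: algebra_simps)
  finally show ?thesis .
qed

lemma moment_coeff_geometric_bound:
  assumes t: "0 < t" and n: "n + 2 \<le> Suc m"
  shows "moment_coeff (Suc m) (n + 2) * t ^ (2 * m - n) \<le> (real (Suc m) / t) ^ n * (moment_coeff (Suc m) 2 * t ^ (2 * m))"
  using n
proof (induction n)
  case (Suc n)
  have "2 * m - n = Suc (2 * m - Suc n)"
    using Suc.prems by simp
  then have power: "t ^ (2 * m - n) = t * t ^ (2 * m - Suc n)"
    by simp
  have "moment_coeff (Suc m) (Suc (n + 2)) \<le> real (Suc m) * moment_coeff (Suc m) (n + 2)"
    using Suc.prems by (intro moment_coeff_Suc_le) simp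
  then have "moment_coeff (Suc m) (Suc n + 2) * t ^ (2 * m - Suc n) \<le>
      real (Suc m) * moment_coeff (Suc m) (n + 2) * t ^ (2 * m - Suc n)"
    using t by (intro mult_right_mono) simp_all
  also have "\<dots> = (real (Suc m) / t) * (moment_coeff (Suc m) (n + 2) * t ^ (2 * m - n))"
    using t unfolding power by (simp add: field_simps)
  also have "\<dots> \<le> (real (Suc m) / t) * ((real (Suc m) / t) ^ n * (moment_coeff (Suc m) 2 * t ^ (2 * m)))"
    using Suc t by (intro mult_left_mono) simp_all
  finally show ?case
    by simp
qed (simp add: numeral_2_eq_2)

lemma second_minus_cross_moment_bounds:
  assumes t: "0 < t" and m: "1 \<le> m" and r: "real (Suc m) / t < 1"
  shows "moment_coeff (Suc m) 2 * t ^ (2 * m) \<le> second_moment (Suc m) t - cross_moment m t"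
    and "second_moment (Suc m) t - cross_moment m t \<le> moment_coeff (Suc m) 2 * t ^ (2 * m) / (1 - real (Suc m) / t)"
proof -
  define r where "r = real (Suc m) / t"
  define L where "L = moment_coeff (Suc m) 2 * t ^ (2 * m)"
  have L: "0 \<le> L"
    unfolding L_def using t by (simp add: moment_coeff_nonneg)
  have terms_nonneg: "0 \<le> moment_coeff (Suc m) (n + 2) * t ^ (2 * m - n)" for n
    using t by (simp add: moment_coeff_nonneg)
  show "L \<le> second_moment (Suc m) t - cross_moment m t"
    using member_le_sum[of 0 "{..<m}" "\<lambda>n. moment_coeff (Suc m) (n + 2) * t ^ (2 * m - n)"] m terms_nonneg
    by (simp add: second_moment_Suc_minus_cross_moment L_def numeral_2_eq_2)
  have "second_moment (Suc m) t - cross_moment m t \<le> (\<Sum>n<m. r ^ n * L)"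
    unfolding second_moment_Suc_minus_cross_moment r_def L_def
    by (intro sum_mono moment_coeff_geometric_bound t) auto
  also have "\<dots> = L * (\<Sum>n<m. r ^ n)"
    by (simp add: sum_distrib_left mult.commute)
  also have "\<dots> = L * ((1 - r ^ m) / (1 - r))"
    using r by (subst sum_gp_strict) (auto simp: r_def)
  also have "\<dots> \<le> L * (1 / (1 - r))"
    using r t L by (intro mult_left_mono divide_right_mono) (simp_all add: r_def)
  finally show "second_moment (Suc m) t - cross_moment m t \<le> L / (1 - real (Suc m) / t)"
    by (simp add: r_def)
qed

definition leading_term :: "nat \<Rightarrow> real \<Rightarrow> real" where
  "leading_term k t = 1 / 4 * t ^ (2 * k) / (fact k)\<^sup>2 * (real k / t)\<^sup>2"

lemma moment_coeff_two:
  assumes t: "0 < t" and m: "1 \<le> m"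
  shows "moment_coeff (Suc m) 2 * t ^ (2 * m) = 2 * real m / (2 * real m - 1) * leading_term (Suc m) t"
proof -
  obtain n where n: "m = Suc n"
    using m by (cases m) auto
  have fact_pos: "(0 :: real) < fact n"
    by simp
  have "moment_coeff (Suc (Suc n)) 2 = fact (2 * n) / (fact n ^ 2 * fact (Suc (Suc (2 * n))))"
    by (simp add: moment_coeff_def numeral_2_eq_2)
  also have "(fact (Suc (Suc (2 * n))) :: real) = (2 * real n + 2) * (2 * real n + 1) * fact (2 * n)"
    by (simp add: algebra_simps)
  finally have coeff: "moment_coeff (Suc (Suc n)) 2 = 1 / (fact n ^ 2 * ((2 * real n + 2) * (2 * real n + 1)))"
    by simp
  have "leading_term (Suc (Suc n)) t =
      1 / 4 * (t\<^sup>2 * t ^ (2 * Suc n)) / (real (Suc (Suc n)) * real (Suc n) * fact n)\<^sup>2 * (real (Suc (Suc n)) / t)\<^sup>2"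
    unfolding leading_term_def by (simp add: power_add[symmetric] algebra_simps)
  also have "\<dots> = t ^ (2 * Suc n) / (4 * (real (Suc n))\<^sup>2 * (fact n)\<^sup>2)"
  proof -
    have "1 / 4 * (t\<^sup>2 * X) / (a * b * F)\<^sup>2 * (a / t)\<^sup>2 = X / (4 * b\<^sup>2 * F\<^sup>2)"
      if "a > 0" "b > 0" "F > 0" for a b F X :: real
      using that t by (simp add: field_simps power2_eq_square)
    then show ?thesis
      using fact_pos by simp
  qed
  finally have leading: "leading_term (Suc (Suc n)) t = t ^ (2 * Suc n) / (4 * (real (Suc n))\<^sup>2 * (fact n)\<^sup>2)" .
  have "1 / (F ^ 2 * ((2 * N + 2) * (2 * N + 1))) * X = (2 * (N + 1) / (2 * (N + 1) - 1)) * (X / (4 * (N + 1) ^ 2 * F ^ 2))"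
    if "F > 0" "N \<ge> 0" for F N X :: real
  proof -
    have "(2 * (N + 1) / (2 * N + 1)) * (X / (4 * (N + 1) ^ 2 * F ^ 2)) =
        (2 * (N + 1) * X) / ((2 * (N + 1)) * (F ^ 2 * ((2 * N + 2) * (2 * N + 1))))"
      by (simp add: power2_eq_square algebra_simps)
    also have "\<dots> = X / (F ^ 2 * ((2 * N + 2) * (2 * N + 1)))"
      using that by (intro mult_divide_mult_cancel_left) simp
    finally show ?thesis
      by (simp add: algebra_simps)
  qed
  from this[OF fact_pos, of "real n" "t ^ (2 * Suc n)"] show ?thesis
    unfolding n coeff leading by (simp add: ac_simps)
qed

lemma second_minus_cross_moment_ratio_bounds:
  assumes t: "0 < t" and m: "1 \<le> m" and r: "real (Suc m) / t < 1"
  shows "2 * real m / (2 * real m - 1) \<le> (second_moment (Suc m) t - cross_moment m t) / leading_term (Suc m) t"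
    and "(second_moment (Suc m) t - cross_moment m t) / leading_term (Suc m) t \<le>
      2 * real m / (2 * real m - 1) / (1 - real (Suc m) / t)"
proof -
  have T: "0 < leading_term (Suc m) t"
    using t by (simp add: leading_term_def)
  note leading = moment_coeff_two[OF t m]
  show "2 * real m / (2 * real m - 1) \<le> (second_moment (Suc m) t - cross_moment m t) / leading_term (Suc m) t"
    using second_minus_cross_moment_bounds(1)[OF t m r] T unfolding leading by (simp add: le_divide_eq)
  have "(second_moment (Suc m) t - cross_moment m t) / leading_term (Suc m) t \<le>
      2 * real m / (2 * real m - 1) * leading_term (Suc m) t / (1 - real (Suc m) / t) / leading_term (Suc m) t"
    using second_minus_cross_moment_bounds(2)[OF t m r] T unfolding leading by (intro divide_right_mono) simp_all
  then show "(second_moment (Suc m) t - cross_moment m t) / leading_term (Suc m) t \<le>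
      2 * real m / (2 * real m - 1) / (1 - real (Suc m) / t)"
    using T by simp
qed

lemma second_minus_cross_moment_asymp_equiv:
  fixes k :: "real \<Rightarrow> nat"
  assumes k_top: "filterlim k at_top at_top" and k_small: "(\<lambda>t. real (k t)) \<in> o[at_top](\<lambda>t. t)"
  shows "(\<lambda>t. second_moment (k t) t - cross_moment (k t - 1) t) \<sim>[at_top] (\<lambda>t. leading_term (k t) t)"
proof -
  define D where "D t = second_moment (k t) t - cross_moment (k t - 1) t" for t
  define e where "e t = 2 * real (k t - 1) / (2 * real (k t - 1) - 1)" for t
  define r where "r t = real (k t) / t" for t
  have k_real_top: "filterlim (\<lambda>t. real (k t)) at_top at_top"
    by (rule filterlim_compose[OF filterlim_real_sequentially k_top])
  have r_0: "(r \<longlongrightarrow> 0) at_top"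
    using smalloD_tendsto[OF k_small] unfolding r_def .
  have ev_k: "eventually (\<lambda>t. 2 \<le> k t) at_top"
    using k_top by (simp add: filterlim_at_top)
  have ev_r: "eventually (\<lambda>t. r t < 1) at_top"
    using r_0 by (rule order_tendstoD) simp
  have e_1: "(e \<longlongrightarrow> 1) at_top"
  proof -
    have "((\<lambda>x::real. 2 * (x - 1) / (2 * (x - 1) - 1)) \<longlongrightarrow> 1) at_top"
      by real_asymp
    from filterlim_compose[OF this k_real_top] show ?thesis
      by (rule Lim_transform_eventually) (use ev_k in \<open>eventually_elim, simp add: e_def of_nat_diff\<close>)
  qed
  have bounds: "eventually (\<lambda>t. e t \<le> D t / leading_term (k t) t \<and> D t / leading_term (k t) t \<le> e t / (1 - r t)) at_top"
    using ev_k ev_r eventually_gt_at_top[of 0]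
  proof eventually_elim
    case (elim t)
    define m where "m = k t - 1"
    have k: "k t = Suc m" and m: "1 \<le> m"
      using elim by (simp_all add: m_def)
    show ?case
      using second_minus_cross_moment_ratio_bounds[OF _ m, of t] elim by (simp add: D_def e_def r_def k)
  qed
  have "((\<lambda>t. D t / leading_term (k t) t) \<longlongrightarrow> 1) at_top"
  proof (rule tendsto_sandwich[OF _ _ e_1])
    show "((\<lambda>t. e t / (1 - r t)) \<longlongrightarrow> 1) at_top"
      using tendsto_divide[OF e_1 tendsto_diff[OF tendsto_const[of 1] r_0]] by simp
    show "eventually (\<lambda>t. e t \<le> D t / leading_term (k t) t) at_top"
      using bounds by eventually_elim simp
    show "eventually (\<lambda>t. D t / leading_term (k t) t \<le> e t / (1 - r t)) at_top"
      using bounds by eventually_elim simp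
  qed
  then show ?thesis
    unfolding D_def by (rule asymp_equivI')
qed

section \<open>Transfer to an arbitrary probability space\<close>

lemma expectation_eq_integral_clock_space:
  fixes M :: "'a measure" and \<xi> :: "nat list \<Rightarrow> nat \<Rightarrow> 'a \<Rightarrow> real" and F :: "clocks \<Rightarrow> real"
  assumes "prob_space M"
    and distributed: "\<And>v l. distributed M lborel (\<xi> v l) (exponential_density 1)"
    and indep: "prob_space.indep_vars M (\<lambda>_. borel) (\<lambda>(v, l). \<xi> v l) UNIV"
    and [measurable]: "F \<in> borel_measurable clock_space"
  shows "prob_space.expectation M (\<lambda>\<omega>. F (\<lambda>(v, l). \<xi> v l \<omega>)) = integral\<^sup>L clock_space F"
proof -
  interpret prob_space M
    by fact
  let ?X = "\<lambda>\<omega>. \<lambda>(v, l). \<xi> v l \<omega>"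
  have rv: "random_variable borel ((\<lambda>(v, l). \<xi> v l) i)" for i
    using distributed_measurable[OF distributed] by (cases i) simp
  have restrict: "(\<lambda>\<omega>. \<lambda>i\<in>UNIV. (\<lambda>(v, l). \<xi> v l) i \<omega>) = ?X"
    by (auto simp: fun_eq_iff restrict_def split: prod.split)
  have law: "distr M borel ((\<lambda>(v, l). \<xi> v l) i) = Exp1" for i
  proof (cases i)
    case (Pair v l)
    have "distr M borel (\<xi> v l) = distr M lborel (\<xi> v l)"
      by (rule distr_cong) auto
    also have "\<dots> = Exp1"
      unfolding Exp1_def by (rule distributed_distr_eq_density[OF distributed])
    finally show ?thesis
      using Pair by simp
  qed
  have "distr M (PiM UNIV (\<lambda>_. borel)) ?X = clock_space"
    using indep_vars_iff_distr_eq_PiM[where I = UNIV and X = "\<lambda>(v, l). \<xi> v l" and M' = "\<lambda>_. borel"] rv indep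
    unfolding restrict law by (simp add: clock_space_def)
  moreover have X_measurable: "?X \<in> measurable M clock_space"
  proof -
    have "(\<lambda>\<omega>. \<lambda>i\<in>UNIV. (\<lambda>(v, l). \<xi> v l) i \<omega>) \<in> measurable M (PiM UNIV (\<lambda>_. borel :: real measure))"
      using rv by (intro measurable_restrict) auto
    then show ?thesis
      unfolding restrict by (simp add: measurable_cong_sets[OF refl sets_clock_space])
  qed
  ultimately have "distr M clock_space ?X = clock_space"
    by (metis distr_cong sets_clock_space)
  then have "integral\<^sup>L clock_space F = integral\<^sup>L (distr M clock_space ?X) F"
    by simp
  also have "\<dots> = expectation (\<lambda>\<omega>. F (?X \<omega>))"
    by (rule integral_distr[OF X_measurable]) simp
  finally show ?thesis
    by simp
qed

theorem lemma4p1: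
  fixes M :: "'a measure"
    and \<xi> :: "nat list \<Rightarrow> nat \<Rightarrow> 'a \<Rightarrow> real"
    and k :: "real \<Rightarrow> nat"
  assumes "prob_space M"
    and "\<And>v l. distributed M lborel (\<xi> v l) (exponential_density 1)"
    and "prob_space.indep_vars M (\<lambda>_. borel) (\<lambda>(v, l). \<xi> v l) UNIV"
    and "filterlim k at_top at_top"
    and "(\<lambda>t. real (k t)) \<in> o[at_top](\<lambda>t. t)"
  shows "(\<lambda>t. prob_space.expectation M (\<lambda>\<omega>.
            (\<Sum>j | 1 \<le> j \<and> cmj_S (\<lambda>v l. \<xi> v l \<omega>) [] j \<le> t.
               cmj_Y (\<lambda>v l. \<xi> v l \<omega>) [j] (k t - 1) (t - cmj_S (\<lambda>v l. \<xi> v l \<omega>) [] j)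
               - cmj_U (k t - 1) (t - cmj_S (\<lambda>v l. \<xi> v l \<omega>) [] j)) ^ 2))
         \<sim>[at_top] (\<lambda>t. 1 / 4 * t ^ (2 * k t) / (fact (k t))\<^sup>2 * (real (k t) / t)\<^sup>2)"
proof -
  have expectation_eq: "prob_space.expectation M (\<lambda>\<omega>. sq_deviation m t (\<lambda>(v, l). \<xi> v l \<omega>)) =
      second_moment (Suc m) t - cross_moment m t" if "0 \<le> t" for m t
    by (simp add: expectation_eq_integral_clock_space[OF assms(1-3) measurable_sq_deviation]
        integral_sq_deviation[OF that])
  have "eventually (\<lambda>t. second_moment (k t) t - cross_moment (k t - 1) t =
      prob_space.expectation M (\<lambda>\<omega>. sq_deviation (k t - 1) t (\<lambda>(v, l). \<xi> v l \<omega>))) at_top"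
    using eventually_ge_at_top[of 0] assms(4)[unfolded filterlim_at_top, rule_format, of 1]
    by eventually_elim (simp add: expectation_eq)
  with second_minus_cross_moment_asymp_equiv[OF assms(4,5)] show ?thesis
    unfolding sq_deviation_def leading_term_def curry_case_prod
    by (rule asymp_equiv_transfer) simp
qed

end
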